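(* Let $\lambda,\mu\in\Lambda$, $g\in\mathcal{D}_{\lambda\mu}$ and $A=(a_{ij})=\kappa(\lambda,g,\mu)$. Then \[\ell(g)=\frac12\sum_{(i,j)\in I^+}\Big(\sum_{x<i,\ y>j}+\sum_{x>i,\ y<j}\Big)a'_{ij}a_{xy}.\]
   Context: Fix integers $r\ge0$, $d\ge2$, $n=2r+2$, $D=2d+2$. $W$ is the group of bijections $g:\mathbb{Z}\to\mathbb{Z}$ with $g(i+D)=g(i)+D$, $g(-i)=-g(i)$, a Coxeter group with simple reflections $s_0,\dots,s_d$ where (elements determined by values on $1,\dots,d$) $s_0(1)=-1$, $s_0(k)=k$ ($k\ge2$); $s_d(d)=d+2$, $s_d(k)=k$ ($k<d$); $s_i$ ($1\le i\le d-1$) swaps $i,i+1$; $\ell$ is Coxeter length. $\Lambda$ is the set of $\lambda=(\lambda_0,\dots,\lambda_{r+1})\in\mathbb{N}^{r+2}$ with sum $d$; with $\lambda_{0,i}=\lambda_0+\dots+\lambda_i$, $W_\lambda$ is generated by $\{s_0,\dots,s_d\}\setminus\{s_{\lambda_{0,0}},\dots,s_{\lambda_{0,r}}\}$; $R_0^\lambda=[-\lambda_0..\lambda_0]$, $R_i^\lambda=(\lambda_{0,i-1}..\lambda_{0,i}]$ ($1\le i\le r$), $R^\lambda_{r+1}=[d+1-\lambda_{r+1}..d+1+\lambda_{r+1}]$, extended by $R^\lambda_{-i}=-R^\lambda_i$, $R^\lambda_{i+n}=R^\lambda_i+D$; $\mathcal{D}_\lambda=\{g\mid\ell(wg)=\ell(w)+\ell(g)\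 \forall w\in W_\lambda\}$, $\mathcal{D}_{\lambda\mu}=\mathcal{D}_\lambda\cap\mathcal{D}_\mu^{-1}$. $\kappa(\lambda,g,\mu)=(|R_i^\lambda\cap g(R_j^\mu)|)_{i,j\in\mathbb{Z}}$. $I^+=(\{0\}\times\mathbb{N})\sqcup([1..r]\times\mathbb{Z})\sqcup(\{r+1\}\times\mathbb{Z}_{\le r+1})$. $a'_{ij}=\frac12(a_{ii}-1)$ if $i=j\in(r+1)\mathbb{Z}$, and $a'_{ij}=a_{ij}$ otherwise. *)

theory Defs
  imports "HOL-Analysis.Analysis"
begin

definition Dp :: "nat \<Rightarrow> int" where "Dp d = 2 * int d + 2"
definition np :: "nat \<Rightarrow> int" where "np r = 2 * int r + 2"

definition Wgrp :: "nat \<Rightarrow> (int \<Rightarrow> int) set" where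
  "Wgrp d = {g. bij g \<and> (\<forall>i. g (i + Dp d) = g i + Dp d) \<and> (\<forall>i. g (- i) = - g i)}"

text \<open>Extension of the values f(1),...,f(d) to the element of W they determine.\<close>
definition extW :: "nat \<Rightarrow> (int \<Rightarrow> int) \<Rightarrow> int \<Rightarrow> int" where
  "extW d f x = (let D = Dp d; q = x div D; t = x mod D in
     if t = 0 then q * D
     else if t \<le> int d then q * D + f t
     else if t = int d + 1 then q * D + int d + 1
     else (q + 1) * D - f (D - t))"

definition sref :: "nat \<Rightarrow> nat \<Rightarrow> int \<Rightarrow> int" where
  "sref d k = extW d (\<lambda>t.
      if k = 0 then (if t = 1 then -1 else t)
      else if k = d then (if t = int d then int d + 2 else t)
      else (if t = int k then int k + 1 else if t = int k + 1 then int k else t))"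

definition wordprod :: "nat \<Rightarrow> nat list \<Rightarrow> int \<Rightarrow> int" where
  "wordprod d ws = foldr (\<lambda>k f. sref d k \<circ> f) ws id"

definition clen :: "nat \<Rightarrow> (int \<Rightarrow> int) \<Rightarrow> nat" where
  "clen d g = (LEAST m. \<exists>ws. set ws \<subseteq> {0..d} \<and> length ws = m \<and> wordprod d ws = g)"

definition Lam :: "nat \<Rightarrow> nat \<Rightarrow> (nat \<Rightarrow> nat) set" where
  "Lam r d = {lam. (\<Sum>i\<le>r+1. lam i) = d \<and> (\<forall>i>r+1. lam i = 0)}"

definition psum :: "(nat \<Rightarrow> nat) \<Rightarrow> nat \<Rightarrow> nat" where
  "psum lam i = (\<Sum>k\<le>i. lam k)"

definition Wpar :: "nat \<Rightarrow> nat \<Rightarrow> (nat \<Rightarrow> nat) \<Rightarrow> (int \<Rightarrow> int) set" where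
  "Wpar r d lam = {wordprod d ws | ws. set ws \<subseteq> {0..d} - {psum lam i | i. i \<le> r}}"

definition Dset :: "nat \<Rightarrow> nat \<Rightarrow> (nat \<Rightarrow> nat) \<Rightarrow> (int \<Rightarrow> int) set" where
  "Dset r d lam = {g \<in> Wgrp d. \<forall>w \<in> Wpar r d lam. clen d (w \<circ> g) = clen d w + clen d g}"

definition Dset2 :: "nat \<Rightarrow> nat \<Rightarrow> (nat \<Rightarrow> nat) \<Rightarrow> (nat \<Rightarrow> nat) \<Rightarrow> (int \<Rightarrow> int) set" where
  "Dset2 r d lam mu = Dset r d lam \<inter> inv ` Dset r d mu"

definition Rbase :: "nat \<Rightarrow> nat \<Rightarrow> (nat \<Rightarrow> nat) \<Rightarrow> nat \<Rightarrow> int set" where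
  "Rbase r d lam j =
     (if j = 0 then {- int (lam 0) .. int (lam 0)}
      else if j \<le> r then {int (psum lam (j - 1)) + 1 .. int (psum lam j)}
      else {int d + 1 - int (lam (r + 1)) .. int d + 1 + int (lam (r + 1))})"

definition Rset :: "nat \<Rightarrow> nat \<Rightarrow> (nat \<Rightarrow> nat) \<Rightarrow> int \<Rightarrow> int set" where
  "Rset r d lam i = (let n = np r; D = Dp d; q = i div n; j = i mod n in
     if j \<le> int r + 1 then (\<lambda>x. x + q * D) ` Rbase r d lam (nat j)
     else (\<lambda>x. (q + 1) * D - x) ` Rbase r d lam (nat (n - j)))"

definition kap :: "nat \<Rightarrow> nat \<Rightarrow> (nat \<Rightarrow> nat) \<Rightarrow> (int \<Rightarrow> int) \<Rightarrow> (nat \<Rightarrow> nat) \<Rightarrow> int \<Rightarrow> int \<Rightarrow> nat" where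
  "kap r d lam g mu i j = card (Rset r d lam i \<inter> g ` Rset r d mu j)"

definition Iplus :: "nat \<Rightarrow> (int \<times> int) set" where
  "Iplus r = {(i, j). (i = 0 \<and> j \<ge> 0) \<or> (1 \<le> i \<and> i \<le> int r) \<or> (i = int r + 1 \<and> j \<le> int r + 1)}"

definition aprime :: "nat \<Rightarrow> (int \<Rightarrow> int \<Rightarrow> nat) \<Rightarrow> int \<Rightarrow> int \<Rightarrow> real" where
  "aprime r a i j = (if i = j \<and> (int r + 1) dvd i then (real (a i j) - 1) / 2 else real (a i j))"

end

theory Submission
  imports Defs
begin

text \<open>
  The Coxeter length of \<open>h \<in> W\<close> is half the sum over \<open>p \<in> [1..d]\<close> of
  \<open>#{q. (p - q)(h p - h q) < 0}\<close>: right multiplication by a simple reflection changes this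
  sum by \<open>\<plusminus>2\<close>, and an element without right descents is the identity.

  For \<open>g \<in> \<D>\<^sub>\<lambda>\<^sub>\<mu>\<close>, the inverse \<open>g\<^sup>-\<^sup>1\<close> is increasing on every block \<open>R\<^sub>i\<^sup>\<lambda>\<close> and \<open>g\<close> on every
  \<open>R\<^sub>j\<^sup>\<mu>\<close>. Assign to \<open>z\<close> the cell \<open>(i, j)\<close> with \<open>z \<in> R\<^sub>i\<^sup>\<lambda> \<inter> g(R\<^sub>j\<^sup>\<mu>)\<close>; then \<open>z\<close> and \<open>w\<close>
  form an inversion of \<open>g\<^sup>-\<^sup>1\<close> exactly when their cells lie in opposite quadrants of each other,
  so the number of inversions of \<open>g\<^sup>-\<^sup>1\<close> at a point of the cell \<open>(i, j)\<close> is the sum of \<open>a\<^sub>x\<^sub>y\<close> over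
  \<open>x < i, y > j\<close> and over \<open>x > i, y < j\<close>. The symmetries \<open>z \<mapsto> -z\<close> and \<open>z \<mapsto> D - z\<close> fold the
  points of the cells indexed by \<open>I\<^sup>+\<close> onto \<open>[1..d]\<close>, which turns the inversion sum of \<open>g\<^sup>-\<^sup>1\<close>
  into the right-hand side. The cells \<open>(0, 0)\<close> and \<open>(r + 1, r + 1)\<close> are symmetric about \<open>0\<close> and
  \<open>d + 1\<close>, and only the half of their points on the side of \<open>[1..d]\<close> is used, whence
  \<open>a'\<^sub>i\<^sub>i = (a\<^sub>i\<^sub>i - 1) / 2\<close>. Finally \<open>\<ell>(g\<^sup>-\<^sup>1) = \<ell>(g)\<close>.
\<close>

section \<open>The group \<open>W\<close> and its simple reflections\<close>

lemma Dp_gt_0: "Dp d > 0"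
  by (simp add: Dp_def)

lemma Wgrp_add_Dp: "g \<in> Wgrp d \<Longrightarrow> g (i + Dp d) = g i + Dp d"
  by (simp add: Wgrp_def)

lemma Wgrp_uminus: "g \<in> Wgrp d \<Longrightarrow> g (- i) = - g i"
  by (simp add: Wgrp_def)

lemma Wgrp_bij: "g \<in> Wgrp d \<Longrightarrow> bij g"
  by (simp add: Wgrp_def)

lemma Wgrp_eq_iff: "g \<in> Wgrp d \<Longrightarrow> g x = g y \<longleftrightarrow> x = y"
  using Wgrp_bij bij_is_inj inj_eq by metis

lemma Wgrp_zero: "g \<in> Wgrp d \<Longrightarrow> g 0 = 0"
  using Wgrp_uminus[of g d 0] by simp

lemma Wgrp_f_inv_f: "g \<in> Wgrp d \<Longrightarrow> g (inv g x) = x"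
  using Wgrp_bij bij_is_surj surj_f_inv_f by metis

lemma Wgrp_inv_f_f: "g \<in> Wgrp d \<Longrightarrow> inv g (g x) = x"
  using Wgrp_bij bij_is_inj inv_f_f by metis

lemma Wgrp_add_mult_Dp:
  assumes g: "g \<in> Wgrp d"
  shows "g (i + m * Dp d) = g i + m * Dp d"
proof (induction m rule: int_induct[where k = 0])
  case (step1 m)
  then show ?case using Wgrp_add_Dp[OF g, of "i + m * Dp d"] by (simp add: algebra_simps)
next
  case (step2 m)
  then show ?case using Wgrp_add_Dp[OF g, of "i + (m - 1) * Dp d"] by (simp add: algebra_simps)
qed simp

lemma Wgrp_mult_Dp_diff: "g \<in> Wgrp d \<Longrightarrow> g (m * Dp d - i) = m * Dp d - g i"
  using Wgrp_add_mult_Dp[of g d "-i" m] Wgrp_uminus[of g d i] by simp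

lemma Wgrp_fix_Suc_d:
  assumes g: "g \<in> Wgrp d"
  shows "g (int d + 1) = int d + 1"
proof -
  have "- g (int d + 1) = g (int d + 1) - Dp d"
    using Wgrp_add_mult_Dp[OF g, of "int d + 1" "-1"] Wgrp_uminus[OF g, of "int d + 1"]
    by (simp add: Dp_def algebra_simps)
  then show ?thesis by (simp add: Dp_def)
qed

lemma Wgrp_id: "id \<in> Wgrp d"
  by (simp add: Wgrp_def)

lemma Wgrp_comp: "g \<in> Wgrp d \<Longrightarrow> h \<in> Wgrp d \<Longrightarrow> g \<circ> h \<in> Wgrp d"
  unfolding Wgrp_def by (auto intro: bij_comp)

lemma Wgrp_inv:
  assumes g: "g \<in> Wgrp d"
  shows "inv g \<in> Wgrp d"
proof -
  have "inv g (i + Dp d) = inv g i + Dp d" for i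
    using Wgrp_add_Dp[OF g, of "inv g i"] Wgrp_f_inv_f[OF g] Wgrp_inv_f_f[OF g] by metis
  moreover have "inv g (- i) = - inv g i" for i
    using Wgrp_uminus[OF g, of "inv g i"] Wgrp_f_inv_f[OF g] Wgrp_inv_f_f[OF g] by metis
  ultimately show ?thesis
    using Wgrp_bij[OF g] bij_imp_bij_inv unfolding Wgrp_def by blast
qed

lemma extW_eq:
  assumes "x = t + q * Dp d" "0 \<le> t" "t < Dp d"
  shows "extW d f x = (if t = 0 then q * Dp d
     else if t \<le> int d then q * Dp d + f t
     else if t = int d + 1 then q * Dp d + int d + 1
     else (q + 1) * Dp d - f (Dp d - t))"
proof -
  have "x div Dp d = q" "x mod Dp d = t" using assms by simp_all
  then show ?thesis unfolding extW_def Let_def by simp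
qed

lemma Wgrp_eq_extW:
  assumes g: "g \<in> Wgrp d"
  shows "g x = extW d g x"
proof -
  define q where "q = x div Dp d"
  define t where "t = x mod Dp d"
  have x: "x = t + q * Dp d" "0 \<le> t" "t < Dp d"
    using Dp_gt_0[of d] by (auto simp: q_def t_def)
  have "g x = g t + q * Dp d" using Wgrp_add_mult_Dp[OF g] by (simp add: x(1))
  moreover have "g t = Dp d - g (Dp d - t)"
    using Wgrp_mult_Dp_diff[OF g, of 1 "Dp d - t"] by simp
  ultimately show ?thesis
    unfolding extW_eq[OF x] using Wgrp_zero[OF g] Wgrp_fix_Suc_d[OF g] by (auto simp: algebra_simps)
qed

lemma mod_add_cases:
  fixes c m x :: int
  assumes "0 \<le> c" "c < m"
  shows "(x + c) mod m = (if x mod m + c < m then x mod m + c else x mod m + c - m)"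
proof -
  have e: "(x + c) mod m = (x mod m + c) mod m" by (simp add: mod_add_left_eq)
  have "0 \<le> x mod m" "x mod m < m" using assms by auto
  show ?thesis
  proof (cases "x mod m + c < m")
    case False
    have "(x mod m + c) mod m = (x mod m + c - m) mod m"
      using minus_mod_self2[of "x mod m + c" m] by simp
    also have "\<dots> = x mod m + c - m"
      by (rule mod_pos_pos_trivial) (use False \<open>x mod m < m\<close> assms in linarith)+
    finally show ?thesis using e False by simp
  qed (use e \<open>0 \<le> x mod m\<close> assms in simp)
qed

lemma mod_diff_cases:
  fixes c m x :: int
  assumes "0 \<le> c" "c < m"
  shows "(x - c) mod m = (if c \<le> x mod m then x mod m - c else x mod m - c + m)"
proof -
  have e: "(x - c) mod m = (x mod m - c) mod m" by (simp add: mod_diff_left_eq)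
  have "0 \<le> x mod m" "x mod m < m" using assms by auto
  show ?thesis
  proof (cases "c \<le> x mod m")
    case False
    have "(x mod m - c) mod m = (x mod m - c + m) mod m"
      using mod_add_self2[of "x mod m - c" m] by simp
    also have "\<dots> = x mod m - c + m"
      by (rule mod_pos_pos_trivial) (use False \<open>0 \<le> x mod m\<close> assms in linarith)+
    finally show ?thesis using e False by simp
  qed (use e \<open>x mod m < m\<close> assms in simp)
qed

lemma sref_mid_eq:
  assumes "1 \<le> k" "k < d"
  shows "sref d k x = (let t = x mod Dp d in
     if t = int k \<or> t = Dp d - int k - 1 then x + 1
     else if t = int k + 1 \<or> t = Dp d - int k then x - 1 else x)"
proof -
  define q where "q = x div Dp d"
  define t where "t = x mod Dp d"
  have x: "x = t + q * Dp d" "0 \<le> t" "t < Dp d"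
    using Dp_gt_0[of d] by (auto simp: q_def t_def)
  show ?thesis
    unfolding sref_def extW_eq[OF x] Let_def t_def[symmetric]
    using x(2,3) assms by (auto simp: x(1) Dp_def algebra_simps)
qed

lemma sref_0_eq:
  assumes "2 \<le> d"
  shows "sref d 0 x = (let t = x mod Dp d in
     if t = 1 then x - 2 else if t = Dp d - 1 then x + 2 else x)"
proof -
  define q where "q = x div Dp d"
  define t where "t = x mod Dp d"
  have x: "x = t + q * Dp d" "0 \<le> t" "t < Dp d"
    using Dp_gt_0[of d] by (auto simp: q_def t_def)
  show ?thesis
    unfolding sref_def extW_eq[OF x] Let_def t_def[symmetric]
    using x(2,3) assms by (auto simp: x(1) Dp_def algebra_simps)
qed

lemma sref_d_eq:
  assumes "2 \<le> d"
  shows "sref d d x = (let t = x mod Dp d in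
     if t = int d then x + 2 else if t = int d + 2 then x - 2 else x)"
proof -
  define q where "q = x div Dp d"
  define t where "t = x mod Dp d"
  have x: "x = t + q * Dp d" "0 \<le> t" "t < Dp d"
    using Dp_gt_0[of d] by (auto simp: q_def t_def)
  show ?thesis
    unfolding sref_def extW_eq[OF x] Let_def t_def[symmetric]
    using x(2,3) assms by (auto simp: x(1) Dp_def algebra_simps)
qed

lemma sref_cases:
  fixes k d :: nat
  assumes "k \<le> d"
  obtains "k = 0" | "k = d" | "1 \<le> k" "k < d"
proof -
  have "k = 0 \<or> k = d \<or> 1 \<le> k \<and> k < d" using assms by linarith
  then show ?thesis using that by blast
qed

lemma sref_add_Dp:
  assumes d: "2 \<le> d" and k: "k \<le> d"
  shows "sref d k (x + Dp d) = sref d k x + Dp d"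
  using k by (cases rule: sref_cases) (auto simp: sref_0_eq[OF d] sref_d_eq[OF d] sref_mid_eq Let_def)

lemma sref_uminus:
  assumes d: "2 \<le> d" and k: "k \<le> d"
  shows "sref d k (- x) = - sref d k x"
proof -
  define t where "t = x mod Dp d"
  have t: "0 \<le> t" "t < Dp d" using Dp_gt_0[of d] by (auto simp: t_def)
  have D: "2 * int d + 2 = Dp d" by (simp add: Dp_def)
  have m: "(- x) mod Dp d = (if t = 0 then 0 else Dp d - t)"
    unfolding t_def by (simp add: zmod_zminus1_eq_if)
  from k show ?thesis
  proof (cases rule: sref_cases)
    case 1 then show ?thesis using t D d by (simp add: sref_0_eq[OF d] Let_def m t_def[symmetric])
  next
    case 2 then show ?thesis using t D d by (simp add: sref_d_eq[OF d] Let_def m t_def[symmetric])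
  next
    case 3 then show ?thesis
      using t D d unfolding sref_mid_eq[OF 3] Let_def m t_def[symmetric] by auto
  qed
qed

lemma mod_Dp_add_diff_cases:
  fixes x :: int
  assumes "2 \<le> d"
  shows "(x + 1) mod Dp d = (if x mod Dp d + 1 < Dp d then x mod Dp d + 1 else x mod Dp d + 1 - Dp d)"
    and "(x + 2) mod Dp d = (if x mod Dp d + 2 < Dp d then x mod Dp d + 2 else x mod Dp d + 2 - Dp d)"
    and "(x - 1) mod Dp d = (if 1 \<le> x mod Dp d then x mod Dp d - 1 else x mod Dp d - 1 + Dp d)"
    and "(x - 2) mod Dp d = (if 2 \<le> x mod Dp d then x mod Dp d - 2 else x mod Dp d - 2 + Dp d)"
  using mod_add_cases[of 1 "Dp d" x] mod_add_cases[of 2 "Dp d" x]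
    mod_diff_cases[of 1 "Dp d" x] mod_diff_cases[of 2 "Dp d" x] assms
  by (auto simp: Dp_def)

lemma sref_invol:
  assumes d: "2 \<le> d" and k: "k \<le> d"
  shows "sref d k (sref d k x) = x"
proof -
  have D: "2 * int d + 2 = Dp d" by (simp add: Dp_def)
  note mods = mod_Dp_add_diff_cases[OF d]
  from k show ?thesis
  proof (cases rule: sref_cases)
    case 1
    consider "x mod Dp d = 1" | "x mod Dp d = Dp d - 1" | "x mod Dp d \<noteq> 1" "x mod Dp d \<noteq> Dp d - 1"
      by blast
    then show ?thesis using 1 by cases (use D d in \<open>simp_all add: mods sref_0_eq Let_def\<close>)
  next
    case 2
    consider "x mod Dp d = int d" | "x mod Dp d = int d + 2"
      | "x mod Dp d \<noteq> int d" "x mod Dp d \<noteq> int d + 2"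
      by blast
    then show ?thesis using 2 by cases (use D d in \<open>simp_all add: mods sref_d_eq Let_def\<close>)
  next
    case 3
    consider "x mod Dp d = int k" | "x mod Dp d = int k + 1" | "x mod Dp d = Dp d - int k - 1"
      | "x mod Dp d = Dp d - int k"
      | "x mod Dp d \<notin> {int k, int k + 1, Dp d - int k - 1, Dp d - int k}"
      by blast
    then show ?thesis by cases (use D 3 in \<open>simp_all add: mods sref_mid_eq Let_def\<close>)
  qed
qed

lemma sref_in_Wgrp:
  assumes "2 \<le> d" "k \<le> d"
  shows "sref d k \<in> Wgrp d"
proof -
  have "bij (sref d k)" by (rule involuntory_imp_bij) (rule sref_invol[OF assms])
  then show ?thesis unfolding Wgrp_def using sref_add_Dp[OF assms] sref_uminus[OF assms] by blast
qed

lemma wordprod_Nil: "wordprod d [] = id"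
  by (simp add: wordprod_def)

lemma wordprod_Cons: "wordprod d (k # ws) = sref d k \<circ> wordprod d ws"
  by (simp add: wordprod_def)

lemma wordprod_snoc: "wordprod d (ws @ [k]) = wordprod d ws \<circ> sref d k"
  by (induction ws) (auto simp: wordprod_def)

lemma wordprod_in_Wgrp: "2 \<le> d \<Longrightarrow> set ws \<subseteq> {0..d} \<Longrightarrow> wordprod d ws \<in> Wgrp d"
  by (induction ws) (auto simp: wordprod_Nil wordprod_Cons Wgrp_id intro!: Wgrp_comp sref_in_Wgrp)

section \<open>Length as half an inversion count\<close>

definition inversions_at :: "(int \<Rightarrow> int) \<Rightarrow> int \<Rightarrow> nat" where
  "inversions_at h p = card {q. (p - q) * (h p - h q) < 0}"

definition inversion_sum :: "nat \<Rightarrow> (int \<Rightarrow> int) \<Rightarrow> nat" where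
  "inversion_sum d h = (\<Sum>p\<in>{1..int d}. inversions_at h p)"

lemma sgn_eq_sgn_iff:
  fixes a b :: int
  shows "sgn a = sgn b \<longleftrightarrow> (a < 0 \<longleftrightarrow> b < 0) \<and> (0 < a \<longleftrightarrow> 0 < b)"
  by (auto simp: sgn_if)

lemma sgn_eq_imp_mult_less_0_iff:
  fixes a b :: int
  shows "sgn a = sgn b \<Longrightarrow> a * X < 0 \<longleftrightarrow> b * X < 0"
  by (auto simp: mult_less_0_iff sgn_if split: if_splits)

lemma card_Collect_toggle:
  assumes "finite {v. Q v}" "finite T" "\<And>v. v \<notin> T \<Longrightarrow> P v = Q v"
  shows "card {v. P v} + card {v\<in>T. Q v} = card {v. Q v} + card {v\<in>T. P v}"
proof -
  have eP: "{v. P v} = {v. Q v \<and> v \<notin> T} \<union> {v\<in>T. P v}" using assms(3) by auto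
  have eQ: "{v. Q v} = {v. Q v \<and> v \<notin> T} \<union> {v\<in>T. Q v}" by auto
  have f1: "finite {v. Q v \<and> v \<notin> T}" using assms(1) by (rule finite_subset[rotated]) auto
  have f2: "finite {v\<in>T. P v}" "finite {v\<in>T. Q v}" using assms(2) by auto
  have "card {v. P v} = card {v. Q v \<and> v \<notin> T} + card {v\<in>T. P v}"
    unfolding eP by (rule card_Un_disjoint) (use f1 f2 in auto)
  moreover have "card {v. Q v} = card {v. Q v \<and> v \<notin> T} + card {v\<in>T. Q v}"
    by (subst eQ, rule card_Un_disjoint) (use f1 f2 in \<open>auto+\<close>)
  ultimately show ?thesis by simp
qed

lemma card_Collect_involution:
  assumes "\<And>x. s (s x) = x"
  shows "card {q. A (s q)} = card {v. A v}"
proof -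
  have "{q. A (s q)} = s ` {v. A v}" using assms by (auto intro: image_eqI[where x="s _"])
  moreover have "inj s" using assms by (metis injI)
  ultimately show ?thesis by (simp add: card_image inj_on_subset[of s UNIV])
qed

lemma card_singleton_filter: "card {v\<in>{a}. P v} = (if P a then 1 else 0)"
proof -
  have "{v\<in>{a}. P v} = (if P a then {a} else {})" by auto
  then show ?thesis by simp
qed

lemma Wgrp_bounded_displacement:
  assumes g: "g \<in> Wgrp d"
  shows "\<exists>C. \<forall>x. \<bar>g x - x\<bar> \<le> C"
proof -
  define C where "C = Max ((\<lambda>t. \<bar>g t - t\<bar>) ` {0..<Dp d})"
  have "\<bar>g x - x\<bar> \<le> C" for x
  proof -
    define t where "t = x mod Dp d"
    have x: "x = t + x div Dp d * Dp d" and t: "t \<in> {0..<Dp d}"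
      using Dp_gt_0[of d] by (auto simp: t_def)
    have "g x - x = g t - t" using Wgrp_add_mult_Dp[OF g, of t "x div Dp d"] x by simp
    moreover have "\<bar>g t - t\<bar> \<le> C" unfolding C_def using t by (intro Max_ge) auto
    ultimately show ?thesis by simp
  qed
  then show ?thesis by blast
qed

lemma finite_inversions:
  assumes g: "g \<in> Wgrp d"
  shows "finite {q. (p - q) * (g p - g q) < 0}"
proof -
  obtain C where C: "\<And>x. \<bar>g x - x\<bar> \<le> C" using Wgrp_bounded_displacement[OF g] by blast
  have "{q. (p - q) * (g p - g q) < 0} \<subseteq> {p - 2 * C .. p + 2 * C}"
  proof
    fix q assume q: "q \<in> {q. (p - q) * (g p - g q) < 0}"
    show "q \<in> {p - 2 * C .. p + 2 * C}"
    proof (rule ccontr)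
      assume "q \<notin> {p - 2 * C .. p + 2 * C}"
      then have "(p - q > 0 \<and> g p - g q > 0) \<or> (p - q < 0 \<and> g p - g q < 0)"
        using C[of p] C[of q] by auto
      then show False using q by (auto simp: mult_less_0_iff)
    qed
  qed
  then show ?thesis by (rule finite_subset) simp
qed

lemma inversions_at_uminus:
  assumes g: "g \<in> Wgrp d"
  shows "inversions_at g (- p) = inversions_at g p"
proof -
  have "(- p - q) * (g (- p) - g q) = (p - (-q)) * (g p - g (-q))" for q
    using Wgrp_uminus[OF g, of p] Wgrp_uminus[OF g, of q] by (simp add: algebra_simps)
  then have "{q. (- p - q) * (g (- p) - g q) < 0} = uminus ` {q. (p - q) * (g p - g q) < 0}"
    by (auto intro: image_eqI[where x="- _"])
  then show ?thesis unfolding inversions_at_def by (simp add: card_image)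
qed

lemma inversions_at_add_mult_Dp:
  assumes g: "g \<in> Wgrp d"
  shows "inversions_at g (p + m * Dp d) = inversions_at g p"
proof -
  have "(p + m * Dp d - q) * (g (p + m * Dp d) - g q)
      = (p - (q - m * Dp d)) * (g p - g (q - m * Dp d))" for q
    using Wgrp_add_mult_Dp[OF g, of p m] Wgrp_add_mult_Dp[OF g, of "q - m * Dp d" m]
    by (simp add: algebra_simps)
  then have "{q. (p + m * Dp d - q) * (g (p + m * Dp d) - g q) < 0}
      = (\<lambda>q. q + m * Dp d) ` {q. (p - q) * (g p - g q) < 0}"
    by (auto intro: image_eqI[where x="_ - m * Dp d"])
  moreover have "inj (\<lambda>q::int. q + m * Dp d)" by (simp add: inj_on_def)
  ultimately show ?thesis unfolding inversions_at_def by (simp add: card_image)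
qed

lemma inversions_at_Dp_diff:
  assumes g: "g \<in> Wgrp d"
  shows "inversions_at g (Dp d - p) = inversions_at g p"
  using inversions_at_add_mult_Dp[OF g, of "-p" 1] inversions_at_uminus[OF g, of p] by simp

lemma inversions_at_comp_involution:
  assumes "\<And>x. s (s x) = x"
  shows "inversions_at (h \<circ> s) p = card {v. (p - s v) * (h (s p) - h v) < 0}"
proof -
  have "inversions_at (h \<circ> s) p = card {q. (\<lambda>v. (p - s v) * (h (s p) - h v) < 0) (s q)}"
    unfolding inversions_at_def using assms by simp
  also have "\<dots> = card {v. (p - s v) * (h (s p) - h v) < 0}"
    by (rule card_Collect_involution) (rule assms)
  finally show ?thesis .
qed

text \<open>Right multiplication by an involution \<open>s\<close> does not change the inversions at a point \<open>p\<close>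
  that \<open>s\<close> fixes and across which it moves no point. At a moved point \<open>p\<close>, the inversions of
  \<open>h \<circ> s\<close> at \<open>p\<close> and those of \<open>h\<close> at \<open>s p\<close> differ only by the points of \<open>T\<close>, the ones that \<open>s\<close> moves
  across \<open>s p\<close> (\<open>inversions_at_comp_toggle\<close>).\<close>
lemma inversion_sum_comp_split:
  assumes inv: "\<And>x. s (s x) = x" and M: "M \<subseteq> {1..int d}"
    and fixed: "\<And>p. p \<in> {1..int d} - M \<Longrightarrow> s p = p"
    and sign: "\<And>p v. p \<in> {1..int d} - M \<Longrightarrow> sgn (p - s v) = sgn (p - v)"
  shows "inversion_sum d (h \<circ> s) + (\<Sum>p\<in>M. inversions_at h p)
       = inversion_sum d h + (\<Sum>p\<in>M. inversions_at (h \<circ> s) p)"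
proof -
  have split: "inversion_sum d f = (\<Sum>p\<in>{1..int d} - M. inversions_at f p) + (\<Sum>p\<in>M. inversions_at f p)"
    for f unfolding inversion_sum_def using sum.subset_diff[OF M] by simp
  have "inversions_at (h \<circ> s) p = inversions_at h p" if "p \<in> {1..int d} - M" for p
  proof -
    have "inversions_at (h \<circ> s) p = card {v. (p - s v) * (h p - h v) < 0}"
      using inversions_at_comp_involution[OF inv, of h p] fixed[OF that] by simp
    then show ?thesis
      unfolding inversions_at_def using sgn_eq_imp_mult_less_0_iff[OF sign[OF that]] by simp
  qed
  then have "(\<Sum>p\<in>{1..int d} - M. inversions_at (h \<circ> s) p) = (\<Sum>p\<in>{1..int d} - M. inversions_at h p)"
    by (rule sum.cong[OF refl])
  then show ?thesis using split[of h] split[of "h \<circ> s"] by simp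
qed

lemma inversions_at_comp_toggle:
  assumes inv: "\<And>x. s (s x) = x" and p: "s p = p'"
    and fin: "finite {v. (p' - v) * (h p' - h v) < 0}" and T: "finite T"
    and sign: "\<And>v. v \<notin> T \<Longrightarrow> sgn (p - s v) = sgn (p' - v)"
  shows "inversions_at (h \<circ> s) p + card {v\<in>T. (p' - v) * (h p' - h v) < 0}
       = inversions_at h p' + card {v\<in>T. (p - s v) * (h p' - h v) < 0}"
proof -
  have "inversions_at (h \<circ> s) p = card {v. (p - s v) * (h p' - h v) < 0}"
    using inversions_at_comp_involution[OF inv, of h p] p by simp
  moreover have "card {v. (p - s v) * (h p' - h v) < 0} + card {v\<in>T. (p' - v) * (h p' - h v) < 0}
      = card {v. (p' - v) * (h p' - h v) < 0} + card {v\<in>T. (p - s v) * (h p' - h v) < 0}"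
    by (rule card_Collect_toggle) (use fin T sgn_eq_imp_mult_less_0_iff[OF sign] in auto)
  ultimately show ?thesis by (simp add: inversions_at_def)
qed

lemma sref_mid_values:
  assumes k: "1 \<le> k" "k < d"
  shows "sref d k (int k) = int k + 1" "sref d k (int k + 1) = int k"
    "p \<in> {1..int d} \<Longrightarrow> p \<noteq> int k \<Longrightarrow> p \<noteq> int k + 1 \<Longrightarrow> sref d k p = p"
  using k by (auto simp: sref_mid_eq Let_def Dp_def)

lemma sref_0_values:
  assumes d: "2 \<le> d"
  shows "sref d 0 1 = -1" "sref d 0 0 = 0" "p \<in> {2..int d} \<Longrightarrow> sref d 0 p = p"
  using d by (auto simp: sref_0_eq Let_def Dp_def)

lemma sref_d_values:
  assumes d: "2 \<le> d"
  shows "sref d d (int d) = int d + 2" "sref d d (int d + 1) = int d + 1"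
    "p \<in> {1..int d - 1} \<Longrightarrow> sref d d p = p"
  using d by (auto simp: sref_d_eq Let_def Dp_def)

lemma Dp_decomp:
  obtains t X where "v = X + t" "0 \<le> t" "t < Dp d" "X = 0 \<or> X \<ge> Dp d \<or> X \<le> - Dp d"
    "v mod Dp d = t"
proof -
  have D: "0 < Dp d" by (rule Dp_gt_0)
  have "v div Dp d = 0 \<or> v div Dp d \<ge> 1 \<or> v div Dp d \<le> -1" by linarith
  then have "v div Dp d * Dp d = 0 \<or> v div Dp d * Dp d \<ge> Dp d \<or> v div Dp d * Dp d \<le> - Dp d"
    using D mult_right_mono[of 1 "v div Dp d" "Dp d"] mult_right_mono[of "v div Dp d" "-1" "Dp d"]
    by auto
  then show ?thesis using that[of "v div Dp d * Dp d" "v mod Dp d"] D by simp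
qed

lemma sgn_sref_mid:
  assumes k: "1 \<le> k" "k < d"
  shows "p \<in> {1..int d} \<Longrightarrow> p \<noteq> int k \<Longrightarrow> p \<noteq> int k + 1 \<Longrightarrow> sgn (p - sref d k v) = sgn (p - v)"
    and "v \<noteq> int k \<Longrightarrow> sgn (int k - sref d k v) = sgn (int k + 1 - v)"
    and "v \<noteq> int k + 1 \<Longrightarrow> sgn (int k + 1 - sref d k v) = sgn (int k - v)"
proof -
  obtain t X where v: "v = X + t" "0 \<le> t" "t < Dp d" "X = 0 \<or> X \<ge> Dp d \<or> X \<le> - Dp d"
     and vm: "v mod Dp d = t" by (rule Dp_decomp)
  have D: "Dp d = 2 * int d + 2" by (simp add: Dp_def)
  have s: "sref d k v = (if t = int k \<or> t = Dp d - int k - 1 then v + 1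
     else if t = int k + 1 \<or> t = Dp d - int k then v - 1 else v)"
    using sref_mid_eq[OF k, of v] vm by (simp add: Let_def)
  show "p \<in> {1..int d} \<Longrightarrow> p \<noteq> int k \<Longrightarrow> p \<noteq> int k + 1 \<Longrightarrow> sgn (p - sref d k v) = sgn (p - v)"
    "v \<noteq> int k \<Longrightarrow> sgn (int k - sref d k v) = sgn (int k + 1 - v)"
    "v \<noteq> int k + 1 \<Longrightarrow> sgn (int k + 1 - sref d k v) = sgn (int k - v)"
    unfolding s sgn_eq_sgn_iff using v D k by auto
qed

lemma sgn_sref_0:
  assumes d: "2 \<le> d"
  shows "p \<in> {2..int d} \<Longrightarrow> sgn (p - sref d 0 v) = sgn (p - v)"
    and "v \<noteq> 0 \<Longrightarrow> v \<noteq> 1 \<Longrightarrow> sgn (1 - sref d 0 v) = sgn (- 1 - v)"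
proof -
  obtain t X where v: "v = X + t" "0 \<le> t" "t < Dp d" "X = 0 \<or> X \<ge> Dp d \<or> X \<le> - Dp d"
     and vm: "v mod Dp d = t" by (rule Dp_decomp)
  have D: "Dp d = 2 * int d + 2" by (simp add: Dp_def)
  have s: "sref d 0 v = (if t = 1 then v - 2 else if t = Dp d - 1 then v + 2 else v)"
    using sref_0_eq[OF d, of v] vm by (simp add: Let_def)
  show "p \<in> {2..int d} \<Longrightarrow> sgn (p - sref d 0 v) = sgn (p - v)"
    "v \<noteq> 0 \<Longrightarrow> v \<noteq> 1 \<Longrightarrow> sgn (1 - sref d 0 v) = sgn (- 1 - v)"
    unfolding s sgn_eq_sgn_iff using v D d by auto
qed

lemma sgn_sref_d:
  assumes d: "2 \<le> d"
  shows "p \<in> {1..int d - 1} \<Longrightarrow> sgn (p - sref d d v) = sgn (p - v)"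
    and "v \<noteq> int d \<Longrightarrow> v \<noteq> int d + 1 \<Longrightarrow> sgn (int d - sref d d v) = sgn (int d + 2 - v)"
proof -
  obtain t X where v: "v = X + t" "0 \<le> t" "t < Dp d" "X = 0 \<or> X \<ge> Dp d \<or> X \<le> - Dp d"
     and vm: "v mod Dp d = t" by (rule Dp_decomp)
  have D: "Dp d = 2 * int d + 2" by (simp add: Dp_def)
  have s: "sref d d v = (if t = int d then v + 2 else if t = int d + 2 then v - 2 else v)"
    using sref_d_eq[OF d, of v] vm by (simp add: Let_def)
  show "p \<in> {1..int d - 1} \<Longrightarrow> sgn (p - sref d d v) = sgn (p - v)"
    "v \<noteq> int d \<Longrightarrow> v \<noteq> int d + 1 \<Longrightarrow> sgn (int d - sref d d v) = sgn (int d + 2 - v)"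
    unfolding s sgn_eq_sgn_iff using v D d by auto
qed

lemma int_eq_add_toggle:
  fixes x y a c :: nat
  assumes "x + a = y + c" "a = (if P then 0 else 2)" "c = (if P then 2 else 0)"
  shows "int x = int y + (if P then 2 else -2)"
  using assms by (cases P) auto

lemma inversion_sum_comp_sref_mid:
  assumes d: "2 \<le> d" and k: "1 \<le> k" "k < d" and h: "h \<in> Wgrp d"
  shows "int (inversion_sum d (h \<circ> sref d k))
       = int (inversion_sum d h) + (if h (int k) < h (int k + 1) then 2 else -2)"
proof -
  let ?s = "sref d k"
  let ?A = "card {v\<in>{int k}. (int k + 1 - v) * (h (int k + 1) - h v) < 0}"
  let ?B = "card {v\<in>{int k + 1}. (int k - v) * (h (int k) - h v) < 0}"
  let ?C = "card {v\<in>{int k}. (int k - ?s v) * (h (int k + 1) - h v) < 0}"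
  let ?D = "card {v\<in>{int k + 1}. (int k + 1 - ?s v) * (h (int k) - h v) < 0}"
  have inv: "\<And>x. ?s (?s x) = x" using sref_invol[OF d] k by simp
  have ne: "h (int k) \<noteq> h (int k + 1)" using Wgrp_eq_iff[OF h] by simp
  have "inversion_sum d (h \<circ> ?s) + (\<Sum>p\<in>{int k, int k + 1}. inversions_at h p)
      = inversion_sum d h + (\<Sum>p\<in>{int k, int k + 1}. inversions_at (h \<circ> ?s) p)"
    by (rule inversion_sum_comp_split[OF inv]) (use k sref_mid_values[OF k] sgn_sref_mid(1)[OF k] in auto)
  moreover have "inversions_at (h \<circ> ?s) (int k) + ?A = inversions_at h (int k + 1) + ?C"
    by (rule inversions_at_comp_toggle[OF inv])
      (use sref_mid_values[OF k] finite_inversions[OF h] sgn_sref_mid(2)[OF k] in auto)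
  moreover have "inversions_at (h \<circ> ?s) (int k + 1) + ?B = inversions_at h (int k) + ?D"
    by (rule inversions_at_comp_toggle[OF inv])
      (use sref_mid_values[OF k] finite_inversions[OF h] sgn_sref_mid(3)[OF k] in auto)
  ultimately have "inversion_sum d (h \<circ> ?s) + (?A + ?B) = inversion_sum d h + (?C + ?D)"
    by simp
  then show ?thesis
    unfolding card_singleton_filter
    by (rule int_eq_add_toggle) (use sref_mid_values(1,2)[OF k] ne in \<open>auto simp: mult_less_0_iff\<close>)
qed

lemma inversion_sum_comp_sref_0:
  assumes d: "2 \<le> d" and h: "h \<in> Wgrp d"
  shows "int (inversion_sum d (h \<circ> sref d 0))
       = int (inversion_sum d h) + (if h (-1) < h 1 then 2 else -2)"
proof -
  let ?s = "sref d 0"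
  let ?A = "card {v\<in>{0, 1}. (-1 - v) * (h (-1) - h v) < 0}"
  let ?C = "card {v\<in>{0, 1}. (1 - ?s v) * (h (-1) - h v) < 0}"
  have inv: "\<And>x. ?s (?s x) = x" using sref_invol[OF d] by simp
  have hn: "h (-1) = - h 1" and h0: "h 0 = 0" using Wgrp_uminus[OF h, of 1] Wgrp_zero[OF h] by auto
  have h1: "h 1 \<noteq> 0" using Wgrp_eq_iff[OF h, of 1 0] h0 by simp
  have "inversion_sum d (h \<circ> ?s) + (\<Sum>p\<in>{1}. inversions_at h p)
      = inversion_sum d h + (\<Sum>p\<in>{1}. inversions_at (h \<circ> ?s) p)"
    by (rule inversion_sum_comp_split[OF inv]) (use d sref_0_values[OF d] sgn_sref_0(1)[OF d] in auto)
  moreover have "inversions_at (h \<circ> ?s) 1 + ?A = inversions_at h (-1) + ?C"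
    by (rule inversions_at_comp_toggle[OF inv])
      (use sref_0_values[OF d] finite_inversions[OF h] sgn_sref_0(2)[OF d] in auto)
  moreover have "inversions_at h (-1) = inversions_at h 1"
    using inversions_at_uminus[OF h, of 1] by simp
  ultimately have "inversion_sum d (h \<circ> ?s) + ?A = inversion_sum d h + ?C"
    by simp
  moreover have "{v\<in>{0, 1}. (-1 - v) * (h (-1) - h v) < 0} = (if h 1 < 0 then {0, 1} else {})"
    "{v\<in>{0, 1}. (1 - ?s v) * (h (-1) - h v) < 0} = (if h 1 > 0 then {0, 1} else {})"
    using hn h0 h1 sref_0_values[OF d] by (auto simp: mult_less_0_iff)
  ultimately show ?thesis
    by (intro int_eq_add_toggle) (use hn h1 in auto)
qed

lemma inversion_sum_comp_sref_d:
  assumes d: "2 \<le> d" and h: "h \<in> Wgrp d"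
  shows "int (inversion_sum d (h \<circ> sref d d))
       = int (inversion_sum d h) + (if h (int d) < h (int d + 2) then 2 else -2)"
proof -
  let ?s = "sref d d"
  let ?A = "card {v\<in>{int d, int d + 1}. (int d + 2 - v) * (h (int d + 2) - h v) < 0}"
  let ?C = "card {v\<in>{int d, int d + 1}. (int d - ?s v) * (h (int d + 2) - h v) < 0}"
  have inv: "\<And>x. ?s (?s x) = x" using sref_invol[OF d] by simp
  have hn: "h (int d + 2) = 2 * int d + 2 - h (int d)"
    using Wgrp_mult_Dp_diff[OF h, of 1 "int d"] by (simp add: Dp_def)
  have hf: "h (int d + 1) = int d + 1" using Wgrp_fix_Suc_d[OF h] .
  have h1: "h (int d) \<noteq> int d + 1" using Wgrp_eq_iff[OF h, of "int d" "int d + 1"] hf by simp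
  have "inversion_sum d (h \<circ> ?s) + (\<Sum>p\<in>{int d}. inversions_at h p)
      = inversion_sum d h + (\<Sum>p\<in>{int d}. inversions_at (h \<circ> ?s) p)"
    by (rule inversion_sum_comp_split[OF inv]) (use d sref_d_values[OF d] sgn_sref_d(1)[OF d] in auto)
  moreover have "inversions_at (h \<circ> ?s) (int d) + ?A = inversions_at h (int d + 2) + ?C"
    by (rule inversions_at_comp_toggle[OF inv])
      (use sref_d_values[OF d] finite_inversions[OF h] sgn_sref_d(2)[OF d] in auto)
  moreover have "inversions_at h (int d + 2) = inversions_at h (int d)"
    using inversions_at_Dp_diff[OF h, of "int d"] by (simp add: Dp_def)
  ultimately have "inversion_sum d (h \<circ> ?s) + ?A = inversion_sum d h + ?C"
    by simp
  moreover have "{v\<in>{int d, int d + 1}. (int d + 2 - v) * (h (int d + 2) - h v) < 0}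
      = (if h (int d) > int d + 1 then {int d, int d + 1} else {})"
    "{v\<in>{int d, int d + 1}. (int d - ?s v) * (h (int d + 2) - h v) < 0}
      = (if h (int d) < int d + 1 then {int d, int d + 1} else {})"
    using hn hf h1 sref_d_values[OF d] by (auto simp: mult_less_0_iff)
  ultimately show ?thesis
    by (intro int_eq_add_toggle) (use hn h1 in auto)
qed

text \<open>The simple reflection \<open>s\<^sub>k\<close> exchanges \<open>sref_lo k\<close> and \<open>sref_hi d k\<close>, so \<open>k\<close> is a right
  descent of \<open>h\<close> iff \<open>h (sref_lo k) > h (sref_hi d k)\<close>.\<close>
definition sref_lo :: "nat \<Rightarrow> int" where
  "sref_lo k = (if k = 0 then -1 else int k)"

definition sref_hi :: "nat \<Rightarrow> nat \<Rightarrow> int" where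
  "sref_hi d k = (if k = 0 then 1 else if k = d then int d + 2 else int k + 1)"

lemma sref_lo_less_hi: "2 \<le> d \<Longrightarrow> sref_lo k < sref_hi d k"
  by (auto simp: sref_lo_def sref_hi_def)

lemma inversion_sum_comp_sref:
  assumes d: "2 \<le> d" and h: "h \<in> Wgrp d" and k: "k \<le> d"
  shows "int (inversion_sum d (h \<circ> sref d k))
       = int (inversion_sum d h) + (if h (sref_lo k) < h (sref_hi d k) then 2 else -2)"
  using k
proof (cases rule: sref_cases)
  case 1 then show ?thesis using inversion_sum_comp_sref_0[OF d h] by (simp add: sref_lo_def sref_hi_def)
next
  case 2 then show ?thesis using inversion_sum_comp_sref_d[OF d h] d by (simp add: sref_lo_def sref_hi_def)
next
  case 3 then show ?thesis using inversion_sum_comp_sref_mid[OF d 3 h] by (simp add: sref_lo_def sref_hi_def)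
qed

lemma int_fixed_of_strict_steps:
  fixes f :: "int \<Rightarrow> int"
  assumes step: "\<And>t. a \<le> t \<Longrightarrow> t < b \<Longrightarrow> f t < f (t + 1)"
    and "f a = a" "f b = b" "a \<le> t" "t \<le> b"
  shows "f t = t"
proof -
  have up: "a + int n \<le> b \<Longrightarrow> a + int n \<le> f (a + int n)" for n
  proof (induction n)
    case (Suc n)
    then show ?case using step[of "a + int n"] by (simp add: algebra_simps)
  qed (use assms in simp)
  have down: "a \<le> b - int n \<Longrightarrow> f (b - int n) \<le> b - int n" for n
  proof (induction n)
    case (Suc n)
    then show ?case using step[of "b - int n - 1"] by (simp add: algebra_simps)
  qed (use assms in simp)
  show ?thesis
    using up[of "nat (t - a)"] down[of "nat (b - t)"] assms(4,5) by simp
qed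

text \<open>Ascents at all generators make \<open>h\<close> strictly increasing on \<open>[0..d + 1]\<close>, from
  \<open>h 0 = 0\<close> to \<open>h (d + 1) = d + 1\<close>; so \<open>h\<close> fixes \<open>[1..d]\<close>, which determines it.\<close>
lemma Wgrp_no_descent_eq_id:
  assumes d: "2 \<le> d" and h: "h \<in> Wgrp d"
    and asc: "\<And>k. k \<le> d \<Longrightarrow> h (sref_lo k) < h (sref_hi d k)"
  shows "h = id"
proof -
  have step: "h t < h (t + 1)" if "0 \<le> t" "t < int d + 1" for t
  proof -
    have "t = 0 \<or> 1 \<le> t \<and> t < int d \<or> t = int d" using that by linarith
    then consider "t = 0" | "1 \<le> t" "t < int d" | "t = int d" by blast
    then show ?thesis
    proof cases
      case 1 then show ?thesis
        using asc[of 0] Wgrp_uminus[OF h, of 1] Wgrp_zero[OF h] by (simp add: sref_lo_def sref_hi_def)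
    next
      case 2
      then have "nat t \<le> d" "nat t \<noteq> d" "nat t \<noteq> 0" "int (nat t) = t" by auto
      then show ?thesis using asc[of "nat t"] by (simp add: sref_lo_def sref_hi_def)
    next
      case 3 then show ?thesis
        using asc[of d] d Wgrp_mult_Dp_diff[OF h, of 1 "int d"] Wgrp_fix_Suc_d[OF h]
        by (simp add: sref_lo_def sref_hi_def Dp_def)
    qed
  qed
  have fixed: "h t = t" if "1 \<le> t" "t \<le> int d" for t
    by (rule int_fixed_of_strict_steps[where a = 0 and b = "int d + 1"])
      (use that step Wgrp_zero[OF h] Wgrp_fix_Suc_d[OF h] in auto)
  show ?thesis
  proof
    fix x
    define t where "t = x mod Dp d"
    have t: "0 \<le> t" "t < Dp d" "Dp d = 2 * int d + 2" using Dp_gt_0[of d] by (auto simp: t_def Dp_def)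
    have "h x = extW d h x" by (rule Wgrp_eq_extW[OF h])
    also have "\<dots> = extW d id x"
      unfolding extW_def Let_def t_def[symmetric] using fixed t by auto
    also have "\<dots> = id x" using Wgrp_eq_extW[OF Wgrp_id, of x] by simp
    finally show "h x = id x" .
  qed
qed

lemma inversion_sum_id: "inversion_sum d id = 0"
  by (simp add: inversion_sum_def inversions_at_def)

lemma inversion_sum_wordprod_le:
  assumes d: "2 \<le> d"
  shows "set ws \<subseteq> {0..d} \<Longrightarrow> inversion_sum d (wordprod d ws) \<le> 2 * length ws"
proof (induction ws rule: rev_induct)
  case (snoc k ws)
  then have W: "wordprod d ws \<in> Wgrp d" and k: "k \<le> d" using wordprod_in_Wgrp[OF d] by auto
  have "inversion_sum d (wordprod d ws \<circ> sref d k) \<le> inversion_sum d (wordprod d ws) + 2"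
    using inversion_sum_comp_sref[OF d W k] by (auto split: if_splits)
  moreover have "inversion_sum d (wordprod d ws) \<le> 2 * length ws" using snoc by simp
  ultimately show ?case unfolding wordprod_snoc length_append_singleton mult_Suc_right by linarith
qed (simp add: wordprod_Nil inversion_sum_id)

text \<open>Induction on the inversion sum: a descent \<open>k\<close> lowers it by two; without descents the
  element is the identity.\<close>
lemma word_of_inversion_sum:
  assumes d: "2 \<le> d"
  shows "h \<in> Wgrp d \<Longrightarrow> \<exists>ws. set ws \<subseteq> {0..d} \<and> 2 * length ws = inversion_sum d h \<and> wordprod d ws = h"
proof (induction "inversion_sum d h" arbitrary: h rule: less_induct)
  case less
  show ?case
  proof (cases "\<exists>k\<le>d. h (sref_lo k) > h (sref_hi d k)")
    case True
    then obtain k where k: "k \<le> d" "h (sref_lo k) > h (sref_hi d k)" by blast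
    let ?h' = "h \<circ> sref d k"
    have W': "?h' \<in> Wgrp d" using Wgrp_comp[OF less.prems sref_in_Wgrp[OF d k(1)]] .
    have S: "inversion_sum d ?h' + 2 = inversion_sum d h"
      using inversion_sum_comp_sref[OF d less.prems k(1)] k(2) by simp
    obtain ws where ws: "set ws \<subseteq> {0..d}" "2 * length ws = inversion_sum d ?h'" "wordprod d ws = ?h'"
      using less.hyps[OF _ W'] S by auto
    have "wordprod d (ws @ [k]) = h"
      using ws(3) sref_invol[OF d k(1)] by (auto simp: wordprod_snoc fun_eq_iff)
    then show ?thesis using ws k S by (intro exI[of _ "ws @ [k]"]) auto
  next
    case False
    have "h (sref_lo k) < h (sref_hi d k)" if "k \<le> d" for k
      using Wgrp_eq_iff[OF less.prems] sref_lo_less_hi[OF d, of k] False that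
      by (metis linorder_neqE less_irrefl)
    then have "h = id" using Wgrp_no_descent_eq_id[OF d less.prems] by blast
    then show ?thesis by (intro exI[of _ "[]"]) (simp add: wordprod_Nil inversion_sum_id)
  qed
qed

lemma twice_clen_eq_inversion_sum:
  assumes d: "2 \<le> d" and h: "h \<in> Wgrp d"
  shows "2 * clen d h = inversion_sum d h"
proof -
  obtain ws where ws: "set ws \<subseteq> {0..d}" "2 * length ws = inversion_sum d h" "wordprod d ws = h"
    using word_of_inversion_sum[OF d h] by blast
  have "clen d h = length ws"
    unfolding clen_def
  proof (rule Least_equality)
    fix m assume "\<exists>ws'. set ws' \<subseteq> {0..d} \<and> length ws' = m \<and> wordprod d ws' = h"
    then show "length ws \<le> m" using inversion_sum_wordprod_le[OF d] ws by fastforce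
  qed (use ws in blast)
  then show ?thesis using ws by simp
qed

lemma wordprod_rev_comp:
  assumes d: "2 \<le> d"
  shows "set ws \<subseteq> {0..d} \<Longrightarrow> wordprod d (rev ws) \<circ> wordprod d ws = id"
proof (induction ws)
  case (Cons k ws)
  have "wordprod d (rev (k # ws)) \<circ> wordprod d (k # ws)
        = wordprod d (rev ws) \<circ> (sref d k \<circ> sref d k) \<circ> wordprod d ws"
    by (simp add: wordprod_snoc wordprod_Cons o_assoc)
  also have "sref d k \<circ> sref d k = id" using sref_invol[OF d] Cons.prems by (auto simp: fun_eq_iff)
  finally show ?case using Cons by simp
qed (simp add: wordprod_Nil)

lemma clen_inv:
  assumes d: "2 \<le> d" and h: "h \<in> Wgrp d"
  shows "clen d (inv h) = clen d h"
proof -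
  have le: "inversion_sum d (inv g) \<le> inversion_sum d g" if g: "g \<in> Wgrp d" for g
  proof -
    obtain ws where ws: "set ws \<subseteq> {0..d}" "2 * length ws = inversion_sum d g" "wordprod d ws = g"
      using word_of_inversion_sum[OF d g] by blast
    have "inv g = wordprod d (rev ws)"
    proof (rule inv_unique_comp)
      show "g \<circ> wordprod d (rev ws) = id" using wordprod_rev_comp[OF d, of "rev ws"] ws by simp
      show "wordprod d (rev ws) \<circ> g = id" using wordprod_rev_comp[OF d, of ws] ws by simp
    qed
    then show ?thesis using inversion_sum_wordprod_le[OF d, of "rev ws"] ws by simp
  qed
  have "inv (inv h) = h" using Wgrp_bij[OF h] by (simp add: inv_inv_eq)
  then have "inversion_sum d (inv h) = inversion_sum d h" using le[OF h] le[OF Wgrp_inv[OF h]] by simp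
  then show ?thesis
    using twice_clen_eq_inversion_sum[OF d h] twice_clen_eq_inversion_sum[OF d Wgrp_inv[OF h]] by simp
qed

lemma clen_comp_sref:
  assumes d: "2 \<le> d" and h: "h \<in> Wgrp d" and k: "k \<le> d"
  shows "int (clen d (h \<circ> sref d k))
       = int (clen d h) + (if h (sref_lo k) < h (sref_hi d k) then 1 else -1)"
  using inversion_sum_comp_sref[OF d h k] twice_clen_eq_inversion_sum[OF d h]
    twice_clen_eq_inversion_sum[OF d Wgrp_comp[OF h sref_in_Wgrp[OF d k]]]
  by (auto split: if_splits)

lemma clen_sref:
  assumes d: "2 \<le> d" and k: "k \<le> d"
  shows "clen d (sref d k) = 1"
  using clen_comp_sref[OF d Wgrp_id k] sref_lo_less_hi[OF d, of k]
    twice_clen_eq_inversion_sum[OF d Wgrp_id]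
  by (simp add: inversion_sum_id)

section \<open>The blocks \<open>R\<^sub>i\<^sup>\<lambda>\<close>\<close>

text \<open>The blocks are intervals: \<open>R\<^sub>j\<^sup>\<lambda> = {Rbase_lo j .. Rbase_hi j}\<close> for \<open>0 \<le> j \<le> r + 1\<close> and
  \<open>R\<^sub>i\<^sup>\<lambda> = {Rset_lo i .. Rset_hi i}\<close> for all \<open>i\<close>, consecutive blocks being adjacent.\<close>
definition Rbase_lo :: "nat \<Rightarrow> nat \<Rightarrow> (nat \<Rightarrow> nat) \<Rightarrow> int \<Rightarrow> int" where
  "Rbase_lo r d lam j = (if j = 0 then - int (lam 0) else if j \<le> int r then int (psum lam (nat (j - 1))) + 1
     else int d + 1 - int (lam (r + 1)))"

definition Rbase_hi :: "nat \<Rightarrow> nat \<Rightarrow> (nat \<Rightarrow> nat) \<Rightarrow> int \<Rightarrow> int" where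
  "Rbase_hi r d lam j = (if j = 0 then int (lam 0) else if j \<le> int r then int (psum lam (nat j))
     else int d + 1 + int (lam (r + 1)))"

definition Rset_lo :: "nat \<Rightarrow> nat \<Rightarrow> (nat \<Rightarrow> nat) \<Rightarrow> int \<Rightarrow> int" where
  "Rset_lo r d lam i = (let q = i div np r; j = i mod np r in
     if j \<le> int r + 1 then Rbase_lo r d lam j + q * Dp d else (q + 1) * Dp d - Rbase_hi r d lam (np r - j))"

definition Rset_hi :: "nat \<Rightarrow> nat \<Rightarrow> (nat \<Rightarrow> nat) \<Rightarrow> int \<Rightarrow> int" where
  "Rset_hi r d lam i = (let q = i div np r; j = i mod np r in
     if j \<le> int r + 1 then Rbase_hi r d lam j + q * Dp d else (q + 1) * Dp d - Rbase_lo r d lam (np r - j))"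

lemma Rbase_eq_atLeastAtMost: "0 \<le> j \<Longrightarrow> Rbase r d lam (nat j) = {Rbase_lo r d lam j .. Rbase_hi r d lam j}"
  unfolding Rbase_def Rbase_lo_def Rbase_hi_def
  by (auto simp: nat_diff_distrib)

lemma np_gt_0: "np r > 0"
  by (simp add: np_def)

lemma Rset_eq_atLeastAtMost: "Rset r d lam i = {Rset_lo r d lam i .. Rset_hi r d lam i}"
proof -
  define q where "q = i div np r"
  define j where "j = i mod np r"
  have j: "0 \<le> j" "j < np r" using np_gt_0[of r] by (auto simp: j_def)
  show ?thesis
  proof (cases "j \<le> int r + 1")
    case True
    have "Rset r d lam i = (\<lambda>x. x + q * Dp d) ` Rbase r d lam (nat j)"
      unfolding Rset_def Let_def q_def[symmetric] j_def[symmetric] using True by simp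
    also have "\<dots> = {Rbase_lo r d lam j + q * Dp d .. Rbase_hi r d lam j + q * Dp d}"
      using Rbase_eq_atLeastAtMost[OF j(1)] by simp
    finally show ?thesis unfolding Rset_lo_def Rset_hi_def Let_def q_def[symmetric] j_def[symmetric] using True by simp
  next
    case False
    have "Rset r d lam i = (\<lambda>x. (q + 1) * Dp d - x) ` Rbase r d lam (nat (np r - j))"
      unfolding Rset_def Let_def q_def[symmetric] j_def[symmetric] using False by simp
    also have "\<dots> = {(q + 1) * Dp d - Rbase_hi r d lam (np r - j) .. (q + 1) * Dp d - Rbase_lo r d lam (np r - j)}"
      using Rbase_eq_atLeastAtMost[of "np r - j"] j by simp
    finally show ?thesis unfolding Rset_lo_def Rset_hi_def Let_def q_def[symmetric] j_def[symmetric] using False by simp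
  qed
qed

lemma Rset_lo_eq: "0 \<le> j \<Longrightarrow> j < np r \<Longrightarrow> Rset_lo r d lam (j + q * np r) =
   (if j \<le> int r + 1 then Rbase_lo r d lam j + q * Dp d else (q + 1) * Dp d - Rbase_hi r d lam (np r - j))"
  unfolding Rset_lo_def Let_def by simp

lemma Rset_hi_eq: "0 \<le> j \<Longrightarrow> j < np r \<Longrightarrow> Rset_hi r d lam (j + q * np r) =
   (if j \<le> int r + 1 then Rbase_hi r d lam j + q * Dp d else (q + 1) * Dp d - Rbase_lo r d lam (np r - j))"
  unfolding Rset_hi_def Let_def by simp

lemma np_decomp:
  obtains q j where "i = j + q * np r" "0 \<le> j" "j < np r"
proof -
  have "i = i mod np r + i div np r * np r" by simp
  moreover have "0 \<le> i mod np r" "i mod np r < np r" using np_gt_0[of r] by auto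
  ultimately show ?thesis using that by blast
qed

lemma psum_mono: "i \<le> j \<Longrightarrow> psum lam i \<le> psum lam j"
  unfolding psum_def by (rule sum_mono2) auto

lemma int_step_crossing:
  fixes f :: "int \<Rightarrow> int"
  shows "f a \<le> z \<Longrightarrow> z < f (a + int k) \<Longrightarrow> \<exists>i. f i \<le> z \<and> z < f (i + 1)"
proof (induction k arbitrary: a)
  case 0 then show ?case by simp
next
  case (Suc k)
  show ?case
  proof (cases "z < f (a + 1)")
    case True then show ?thesis using Suc by blast
  next
    case False
    have e: "a + int (Suc k) = (a + 1) + int k" by simp
    have "f (a + 1) \<le> z" using False by simp
    moreover have "z < f ((a + 1) + int k)" using Suc.prems(2) unfolding e .
    ultimately show ?thesis using Suc.IH by blast
  qed
qed

lemma Rbase_lo_le_hi: "Rbase_lo r d lam j \<le> Rbase_hi r d lam j + 1"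
proof -
  have "psum lam (nat (j - 1)) \<le> psum lam (nat j)" by (rule psum_mono) simp
  then show ?thesis unfolding Rbase_lo_def Rbase_hi_def by auto
qed

lemma Rset_lo_le_hi: "Rset_lo r d lam i \<le> Rset_hi r d lam i + 1"
  unfolding Rset_lo_def Rset_hi_def Let_def
  using Rbase_lo_le_hi[of r d lam "i mod np r"] Rbase_lo_le_hi[of r d lam "np r - i mod np r"] by auto

lemma mem_Rset_iff: "z \<in> Rset r d lam i \<longleftrightarrow> Rset_lo r d lam i \<le> z \<and> z \<le> Rset_hi r d lam i"
  unfolding Rset_eq_atLeastAtMost by simp

lemma Rset_lo_mult_np: "Rset_lo r d lam (m * np r) = - int (lam 0) + m * Dp d"
  using Rset_lo_eq[of 0 r d lam m] np_gt_0[of r] by (simp add: Rbase_lo_def)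

lemma Rset_lo_add_np: "Rset_lo r d lam (i + np r) = Rset_lo r d lam i + Dp d"
proof -
  have "(i + np r) div np r = i div np r + 1" "(i + np r) mod np r = i mod np r"
    using np_gt_0[of r] by simp_all
  then show ?thesis unfolding Rset_lo_def Let_def by (simp add: algebra_simps)
qed

lemma Rset_hi_add_np: "Rset_hi r d lam (i + np r) = Rset_hi r d lam i + Dp d"
proof -
  have "(i + np r) div np r = i div np r + 1" "(i + np r) mod np r = i mod np r"
    using np_gt_0[of r] by simp_all
  then show ?thesis unfolding Rset_hi_def Let_def by (simp add: algebra_simps)
qed

lemma add_Dp_mem_Rset_iff: "z + Dp d \<in> Rset r d lam (i + np r) \<longleftrightarrow> z \<in> Rset r d lam i"
  unfolding mem_Rset_iff Rset_lo_add_np Rset_hi_add_np by auto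

lemma Rset_0: "Rset r d lam 0 = {- int (lam 0) .. int (lam 0)}"
  unfolding Rset_eq_atLeastAtMost using Rset_lo_eq[of 0 r d lam 0] Rset_hi_eq[of 0 r d lam 0] np_gt_0[of r]
  by (simp add: Rbase_lo_def Rbase_hi_def)

lemma Rset_last: "Rset r d lam (int r + 1) = {int d + 1 - int (lam (r + 1)) .. int d + 1 + int (lam (r + 1))}"
  unfolding Rset_eq_atLeastAtMost using Rset_lo_eq[of "int r + 1" r d lam 0] Rset_hi_eq[of "int r + 1" r d lam 0]
  by (simp add: Rbase_lo_def Rbase_hi_def np_def)

context
  fixes r d :: nat and lam :: "nat \<Rightarrow> nat"
  assumes lam: "lam \<in> Lam r d"
begin

lemma psum_add_last: "psum lam r + lam (r + 1) = d"
  using lam unfolding Lam_def psum_def by simp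

lemma Rbase_lo_succ: "0 \<le> j \<Longrightarrow> j \<le> int r \<Longrightarrow> Rbase_lo r d lam (j + 1) = Rbase_hi r d lam j + 1"
proof -
  assume j: "0 \<le> j" "j \<le> int r"
  have pr: "psum lam r + lam (r + 1) = d" by (rule psum_add_last)
  have p0: "psum lam 0 = lam 0" by (simp add: psum_def)
  consider "j = 0" "r = 0" | "j = 0" "r \<ge> 1" | "j \<ge> 1" "j < int r" | "j \<ge> 1" "j = int r" using j by linarith
  then show ?thesis
  proof cases
    case 1 then show ?thesis using pr p0 unfolding Rbase_lo_def Rbase_hi_def by simp
  next
    case 2 then show ?thesis using p0 unfolding Rbase_lo_def Rbase_hi_def by simp
  next
    case 3 then show ?thesis unfolding Rbase_lo_def Rbase_hi_def by simp
  next
    case 4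
    then have "nat j = r" by simp
    then show ?thesis using 4 pr unfolding Rbase_lo_def Rbase_hi_def by simp
  qed
qed

lemma Rset_lo_uminus: "Rset_lo r d lam (- i) = - Rset_hi r d lam i"
proof -
  obtain q j where i: "i = j + q * np r" and j: "0 \<le> j" "j < np r" by (rule np_decomp)
  have n: "np r = 2 * int r + 2" by (simp add: np_def)
  have D: "Dp d = 2 * int d + 2" by (simp add: Dp_def)
  have pr: "psum lam r + lam (r + 1) = d" by (rule psum_add_last)
  have hi: "Rset_hi r d lam i = (if j \<le> int r + 1 then Rbase_hi r d lam j + q * Dp d else (q + 1) * Dp d - Rbase_lo r d lam (np r - j))"
    unfolding i by (rule Rset_hi_eq[OF j])
  consider "j = 0" | "1 \<le> j" "j \<le> int r" | "j = int r + 1" | "int r + 2 \<le> j" using j n by linarith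
  then show ?thesis
  proof cases
    case 1
    have "- i = 0 + (- q) * np r" using 1 i by simp
    then have "Rset_lo r d lam (- i) = Rbase_lo r d lam 0 + (- q) * Dp d" using Rset_lo_eq[of 0 r d lam "-q"] n by simp
    then show ?thesis using hi 1 by (simp add: Rbase_lo_def Rbase_hi_def)
  next
    case 2
    have "- i = (np r - j) + (- q - 1) * np r" using i by (simp add: algebra_simps)
    then have "Rset_lo r d lam (- i) = (- q - 1 + 1) * Dp d - Rbase_hi r d lam (np r - (np r - j))"
      using Rset_lo_eq[of "np r - j" r d lam "- q - 1"] n 2 j by simp
    then show ?thesis using hi 2 by (simp add: algebra_simps)
  next
    case 3
    have "- i = (int r + 1) + (- q - 1) * np r" using i 3 n by (simp add: algebra_simps)
    then have "Rset_lo r d lam (- i) = Rbase_lo r d lam (int r + 1) + (- q - 1) * Dp d"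
      using Rset_lo_eq[of "int r + 1" r d lam "- q - 1"] n by simp
    then show ?thesis using hi 3 D by (simp add: Rbase_lo_def Rbase_hi_def algebra_simps)
  next
    case 4
    have "- i = (np r - j) + (- q - 1) * np r" using i by (simp add: algebra_simps)
    then have "Rset_lo r d lam (- i) = Rbase_lo r d lam (np r - j) + (- q - 1) * Dp d"
      using Rset_lo_eq[of "np r - j" r d lam "- q - 1"] n 4 j by simp
    then show ?thesis using hi 4 by (simp add: algebra_simps)
  qed
qed

lemma Rset_hi_uminus: "Rset_hi r d lam (- i) = - Rset_lo r d lam i"
  using Rset_lo_uminus[of "- i"] by simp

text \<open>By the symmetry \<open>R\<^sub>-\<^sub>i = -R\<^sub>i\<close> it suffices to treat \<open>i mod n \<le> r\<close>, where \<open>R\<^sub>i\<close> and \<open>R\<^sub>i\<^sub>+\<^sub>1\<close>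
  are translates of consecutive base blocks.\<close>
lemma Rset_lo_succ: "Rset_lo r d lam (i + 1) = Rset_hi r d lam i + 1"
proof -
  have n: "np r = 2 * int r + 2" by (simp add: np_def)
  have low: "Rset_lo r d lam (i + 1) = Rset_hi r d lam i + 1" if "i mod np r \<le> int r" for i
  proof -
    obtain q j where i: "i = j + q * np r" and j: "0 \<le> j" "j < np r" by (rule np_decomp)
    then have jr: "j \<le> int r" using that by simp
    have "Rset_lo r d lam (i + 1) = Rset_lo r d lam ((j + 1) + q * np r)"
      by (simp add: i algebra_simps)
    also have "\<dots> = Rbase_lo r d lam (j + 1) + q * Dp d"
      using Rset_lo_eq[of "j + 1" r d lam q] j jr n by simp
    also have "\<dots> = Rset_hi r d lam i + 1"
      using Rset_hi_eq[OF j, of d lam q] Rbase_lo_succ[OF j(1) jr] jr i by simp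
    finally show ?thesis .
  qed
  show ?thesis
  proof (cases "i mod np r \<le> int r")
    case False
    define m where "m = i mod np r"
    have m: "int r + 1 \<le> m" "m < np r" using False np_gt_0[of r] by (auto simp: m_def)
    have e: "- (i + 1) = (np r - 1 - m) + (- (i div np r) - 1) * np r"
      using div_mult_mod_eq[of i "np r"] by (simp add: m_def algebra_simps)
    have "(- (i + 1)) mod np r = (np r - 1 - m) mod np r"
      unfolding e by (rule mod_mult_self1)
    also have "\<dots> = np r - 1 - m" using m by (intro mod_pos_pos_trivial) auto
    finally have "(- (i + 1)) mod np r \<le> int r" using m n by simp
    then have "Rset_lo r d lam (- i) = Rset_hi r d lam (- (i + 1)) + 1"
      using low[of "- (i + 1)"] by simp
    moreover have "Rset_lo r d lam (- i) = - Rset_hi r d lam i" by (rule Rset_lo_uminus)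
    moreover have "Rset_hi r d lam (- (i + 1)) = - Rset_lo r d lam (i + 1)" by (rule Rset_hi_uminus)
    ultimately show ?thesis by linarith
  qed (rule low)
qed

lemma Rset_lo_le_succ: "Rset_lo r d lam i \<le> Rset_lo r d lam (i + 1)"
  using Rset_lo_succ[of i] Rset_lo_le_hi[of r d lam i] by simp

lemma Rset_lo_mono_nat: "Rset_lo r d lam i \<le> Rset_lo r d lam (i + int k)"
proof (induction k)
  case 0 then show ?case by simp
next
  case (Suc k)
  have e: "i + int (Suc k) = (i + int k) + 1" by simp
  show ?case unfolding e using Rset_lo_le_succ[of "i + int k"] Suc.IH by linarith
qed

lemma Rset_lo_mono: "i \<le> i' \<Longrightarrow> Rset_lo r d lam i \<le> Rset_lo r d lam i'"
  using Rset_lo_mono_nat[of i "nat (i' - i)"] by simp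

lemma Rset_less: "z \<in> Rset r d lam i \<Longrightarrow> z' \<in> Rset r d lam i' \<Longrightarrow> i < i' \<Longrightarrow> z < z'"
proof -
  assume a: "z \<in> Rset r d lam i" "z' \<in> Rset r d lam i'" "i < i'"
  have "z \<le> Rset_hi r d lam i" using a mem_Rset_iff by blast
  also have "\<dots> < Rset_lo r d lam (i + 1)" using Rset_lo_succ[of i] by simp
  also have "\<dots> \<le> Rset_lo r d lam i'" using a(3) by (intro Rset_lo_mono) simp
  also have "\<dots> \<le> z'" using a mem_Rset_iff by blast
  finally show ?thesis .
qed

lemma Rset_unique: "z \<in> Rset r d lam i \<Longrightarrow> z \<in> Rset r d lam i' \<Longrightarrow> i = i'"
  using Rset_less[of z i z i'] Rset_less[of z i' z i] by (cases "i < i'"; cases "i' < i") auto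

lemma Rset_cover: "\<exists>i. z \<in> Rset r d lam i"
proof -
  define m where "m = z div Dp d"
  have zm: "m * Dp d \<le> z" "z < m * Dp d + Dp d" unfolding m_def
    using div_mult_mod_eq[of z "Dp d"] pos_mod_sign[of "Dp d" z] pos_mod_bound[of "Dp d" z] Dp_gt_0[of d]
    by linarith+
  have l0: "lam 0 \<le> d" using psum_add_last psum_mono[of 0 r lam] by (simp add: psum_def)
  have D: "Dp d = 2 * int d + 2" by (simp add: Dp_def)
  have a: "Rset_lo r d lam ((m - 1) * np r) \<le> z" using Rset_lo_mult_np[of r d lam "m - 1"] zm by (simp add: algebra_simps)
  have b: "z < Rset_lo r d lam ((m - 1) * np r + int (nat (3 * np r)))"
  proof -
    have "(m - 1) * np r + int (nat (3 * np r)) = (m + 2) * np r" using np_gt_0[of r] by (simp add: algebra_simps)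
    then show ?thesis using Rset_lo_mult_np[of r d lam "m + 2"] zm l0 D by (simp add: algebra_simps)
  qed
  obtain i where i: "Rset_lo r d lam i \<le> z" "z < Rset_lo r d lam (i + 1)" using int_step_crossing[OF a b] by blast
  then have "z \<in> Rset r d lam i" unfolding mem_Rset_iff using Rset_lo_succ[of i] by simp
  then show ?thesis by blast
qed

lemma uminus_mem_Rset_iff: "- z \<in> Rset r d lam (- i) \<longleftrightarrow> z \<in> Rset r d lam i"
  unfolding mem_Rset_iff Rset_lo_uminus Rset_hi_uminus by auto

end

section \<open>Minimal coset representatives are increasing on blocks\<close>

text \<open>For \<open>g \<in> \<D>\<^sub>\<lambda>\<close> the inverse \<open>g\<^sup>-\<^sup>1\<close> has every generator of \<open>W\<^sub>\<lambda>\<close> as a right ascent; this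
  is all that is used about minimal coset representatives.\<close>
definition Wpar_ascending :: "nat \<Rightarrow> nat \<Rightarrow> (nat \<Rightarrow> nat) \<Rightarrow> (int \<Rightarrow> int) \<Rightarrow> bool" where
  "Wpar_ascending r d lam \<phi> \<longleftrightarrow>
     (\<forall>k\<le>d. (\<forall>i\<le>r. k \<noteq> psum lam i) \<longrightarrow> \<phi> (sref_lo k) < \<phi> (sref_hi d k))"

lemma Dset_imp_Wpar_ascending_inv:
  assumes d: "2 \<le> d" and g: "g \<in> Dset r d lam"
  shows "Wpar_ascending r d lam (inv g)"
  unfolding Wpar_ascending_def
proof (intro allI impI)
  fix k assume k: "k \<le> d" and nk: "\<forall>i\<le>r. k \<noteq> psum lam i"
  let ?s = "sref d k"
  have gW: "g \<in> Wgrp d" using g by (simp add: Dset_def)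
  have sW: "?s \<in> Wgrp d" using sref_in_Wgrp[OF d k] .
  have "?s \<in> Wpar r d lam"
    unfolding Wpar_def by (rule CollectI, rule exI[of _ "[k]"]) (use k nk in \<open>auto simp: wordprod_Cons wordprod_Nil\<close>)
  then have "clen d (?s \<circ> g) = clen d ?s + clen d g" using g by (simp add: Dset_def)
  moreover have "clen d ?s = 1" using clen_sref[OF d k] .
  moreover have "inv (?s \<circ> g) = inv g \<circ> ?s"
    using o_inv_distrib[OF Wgrp_bij[OF sW] Wgrp_bij[OF gW]]
      inv_unique_comp[of ?s ?s] sref_invol[OF d k] by (simp add: fun_eq_iff comp_def)
  ultimately have "clen d (inv g \<circ> ?s) = clen d (inv g) + 1"
    using clen_inv[OF d Wgrp_comp[OF sW gW]] clen_inv[OF d gW] by simp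
  then show "inv g (sref_lo k) < inv g (sref_hi d k)"
    using clen_comp_sref[OF d Wgrp_inv[OF gW] k] by (auto split: if_splits)
qed

context
  fixes r d :: nat and lam :: "nat \<Rightarrow> nat" and \<phi> :: "int \<Rightarrow> int"
  assumes lam: "lam \<in> Lam r d" and d: "2 \<le> d" and phi: "\<phi> \<in> Wgrp d"
    and asc: "Wpar_ascending r d lam \<phi>"
begin

lemma ascending_step_inner:
  assumes "1 \<le> y" "y < int d" "\<forall>i\<le>r. nat y \<noteq> psum lam i"
  shows "\<phi> y < \<phi> (y + 1)"
proof -
  have "\<phi> (sref_lo (nat y)) < \<phi> (sref_hi d (nat y))"
    using asc assms unfolding Wpar_ascending_def by simp
  moreover have "nat y \<noteq> d" "nat y \<noteq> 0" using assms by auto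
  ultimately show ?thesis using assms by (simp add: sref_lo_def sref_hi_def)
qed

lemma ascending_step_0:
  assumes "lam 0 \<ge> 1"
  shows "\<phi> 1 > 0"
proof -
  have "psum lam 0 = lam 0" by (simp add: psum_def)
  then have "0 < psum lam i" for i using psum_mono[of 0 i lam] assms by simp
  then have "\<forall>i\<le>r. 0 \<noteq> psum lam i" by (metis less_irrefl)
  then have "\<phi> (sref_lo 0) < \<phi> (sref_hi d 0)" using asc unfolding Wpar_ascending_def by simp
  then show ?thesis using Wgrp_uminus[OF phi, of 1] by (simp add: sref_lo_def sref_hi_def)
qed

lemma ascending_step_d:
  assumes "lam (r + 1) \<ge> 1"
  shows "\<phi> (int d) < int d + 1"
proof -
  have "\<forall>i\<le>r. d \<noteq> psum lam i"
    using psum_mono[of _ r lam] psum_add_last[OF lam] assms by fastforce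
  then have "\<phi> (sref_lo d) < \<phi> (sref_hi d d)" using asc unfolding Wpar_ascending_def by simp
  moreover have "\<phi> (int d + 2) = Dp d - \<phi> (int d)"
    using Wgrp_mult_Dp_diff[OF phi, of 1 "int d"] by (simp add: Dp_def)
  ultimately show ?thesis using d by (simp add: sref_lo_def sref_hi_def Dp_def)
qed

lemma ascending_on_Rset_0:
  assumes "- int (lam 0) \<le> x" "x + 1 \<le> int (lam 0)"
  shows "\<phi> x < \<phi> (x + 1)"
proof -
  have pos: "\<phi> y < \<phi> (y + 1)" if "1 \<le> y" "y + 1 \<le> int (lam 0)" for y
  proof (rule ascending_step_inner)
    have "lam 0 \<le> psum lam i" for i using psum_mono[of 0 i lam] by (simp add: psum_def)
    moreover have "nat y < lam 0" using that by (simp add: nat_less_iff)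
    ultimately show "\<forall>i\<le>r. nat y \<noteq> psum lam i" by (metis leD)
    show "y < int d" using that psum_add_last[OF lam] psum_mono[of 0 r lam] by (simp add: psum_def)
  qed (use that in simp)
  consider "1 \<le> x" | "x = 0" | "x = -1" | "x \<le> -2" by linarith
  then show ?thesis
  proof cases
    case 1 then show ?thesis using pos assms by simp
  next
    case 2 then show ?thesis using ascending_step_0 assms Wgrp_zero[OF phi] by simp
  next
    case 3 then show ?thesis
      using ascending_step_0 assms Wgrp_zero[OF phi] Wgrp_uminus[OF phi, of 1] by simp
  next
    case 4
    have "\<phi> (- x - 1) < \<phi> (- x - 1 + 1)" using pos[of "- x - 1"] 4 assms by simp
    then show ?thesis using Wgrp_uminus[OF phi, of "x + 1"] Wgrp_uminus[OF phi, of x] by simp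
  qed
qed

lemma ascending_on_Rset_inner:
  assumes j: "1 \<le> j" "j \<le> r"
    and x: "int (psum lam (j - 1)) + 1 \<le> x" "x + 1 \<le> int (psum lam j)"
  shows "\<phi> x < \<phi> (x + 1)"
proof (rule ascending_step_inner)
  have "psum lam 0 \<le> psum lam (j - 1)" by (rule psum_mono) simp
  then show "1 \<le> x" using x by simp
  have "psum lam j \<le> psum lam r" using j by (intro psum_mono)
  then show "x < int d" using x psum_add_last[OF lam] by linarith
  show "\<forall>i\<le>r. nat x \<noteq> psum lam i"
  proof (intro allI impI)
    fix i
    show "nat x \<noteq> psum lam i"
    proof (cases "i < j")
      case True
      then have "psum lam i \<le> psum lam (j - 1)" by (intro psum_mono) simp
      then show ?thesis using x by linarith
    next
      case False
      then have "psum lam j \<le> psum lam i" by (intro psum_mono) simp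
      then show ?thesis using x by linarith
    qed
  qed
qed

lemma ascending_on_Rset_last:
  assumes x: "int d + 1 - int (lam (r + 1)) \<le> x" "x + 1 \<le> int d + 1 + int (lam (r + 1))"
  shows "\<phi> x < \<phi> (x + 1)"
proof -
  have low: "\<phi> y < \<phi> (y + 1)" if "int d + 1 - int (lam (r + 1)) \<le> y" "y < int d" for y
  proof (rule ascending_step_inner)
    have "psum lam i \<le> psum lam r" if "i \<le> r" for i using that by (intro psum_mono)
    then show "\<forall>i\<le>r. nat y \<noteq> psum lam i" using that psum_add_last[OF lam] by fastforce
    show "1 \<le> y" using that psum_add_last[OF lam] by linarith
  qed (use that in simp)
  have r2: "\<phi> (Dp d - y) = Dp d - \<phi> y" for y using Wgrp_mult_Dp_diff[OF phi, of 1 y] by simp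
  have fixd: "\<phi> (int d + 1) = int d + 1" by (rule Wgrp_fix_Suc_d[OF phi])
  have D: "Dp d = 2 * int d + 2" by (simp add: Dp_def)
  consider "x < int d" | "x = int d" | "x = int d + 1" | "x \<ge> int d + 2" by linarith
  then show ?thesis
  proof cases
    case 1 then show ?thesis using low x by simp
  next
    case 2 then show ?thesis using ascending_step_d x fixd by simp
  next
    case 3
    have "\<phi> (x + 1) = Dp d - \<phi> (int d)" using r2[of "int d"] 3 D by (simp add: algebra_simps)
    moreover have "\<phi> x = int d + 1" using 3 fixd by simp
    moreover have "\<phi> (int d) < int d + 1" using ascending_step_d x 3 by simp
    ultimately show ?thesis using D by linarith
  next
    case 4
    have "\<phi> (Dp d - x - 1) < \<phi> (Dp d - x - 1 + 1)" using low[of "Dp d - x - 1"] 4 x D by simp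
    moreover have "\<phi> x = Dp d - \<phi> (Dp d - x)" using r2[of "Dp d - x"] by simp
    moreover have "\<phi> (x + 1) = Dp d - \<phi> (Dp d - x - 1)" using r2[of "Dp d - x - 1"] by simp
    ultimately show ?thesis by simp
  qed
qed

lemma ascending_on_Rbase:
  assumes j: "0 \<le> j" "j \<le> int r + 1"
    and x: "Rbase_lo r d lam j \<le> x" "x + 1 \<le> Rbase_hi r d lam j"
  shows "\<phi> x < \<phi> (x + 1)"
proof -
  consider "j = 0" | "1 \<le> j" "j \<le> int r" | "j = int r + 1" using j by linarith
  then show ?thesis
  proof cases
    case 1 then show ?thesis
      using x ascending_on_Rset_0 by (simp add: Rbase_lo_def Rbase_hi_def)
  next
    case 2 then show ?thesis
      using x ascending_on_Rset_inner[of "nat j"] by (simp add: Rbase_lo_def Rbase_hi_def nat_diff_distrib)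
  next
    case 3 then show ?thesis
      using x ascending_on_Rset_last by (simp add: Rbase_lo_def Rbase_hi_def)
  qed
qed

lemma ascending_on_Rset:
  assumes x: "x \<in> Rset r d lam i" "x + 1 \<in> Rset r d lam i"
  shows "\<phi> x < \<phi> (x + 1)"
proof -
  obtain q j where i: "i = j + q * np r" and j: "0 \<le> j" "j < np r" by (rule np_decomp)
  have n: "np r = 2 * int r + 2" by (simp add: np_def)
  have xb: "Rset_lo r d lam i \<le> x" "x + 1 \<le> Rset_hi r d lam i" using x mem_Rset_iff by blast+
  note lo = Rset_lo_eq[OF j, where d = d and lam = lam and q = q]
    and hi = Rset_hi_eq[OF j, where d = d and lam = lam and q = q]
  show ?thesis
  proof (cases "j \<le> int r + 1")
    case True
    define y where "y = x - q * Dp d"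
    have "\<phi> y < \<phi> (y + 1)"
      by (rule ascending_on_Rbase[OF j(1) True]) (use xb lo hi True i in \<open>auto simp: y_def\<close>)
    moreover have "\<phi> x = \<phi> y + q * Dp d" "\<phi> (x + 1) = \<phi> (y + 1) + q * Dp d"
      using Wgrp_add_mult_Dp[OF phi, of y q] Wgrp_add_mult_Dp[OF phi, of "y + 1" q]
      by (simp_all add: y_def)
    ultimately show ?thesis by simp
  next
    case False
    define y where "y = (q + 1) * Dp d - x - 1"
    have "\<phi> y < \<phi> (y + 1)"
      by (rule ascending_on_Rbase[of "np r - j"]) (use xb lo hi False i j n in \<open>auto simp: y_def\<close>)
    moreover have "\<phi> x = (q + 1) * Dp d - \<phi> (y + 1)" "\<phi> (x + 1) = (q + 1) * Dp d - \<phi> y"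
      using Wgrp_mult_Dp_diff[OF phi, of "q + 1" "y + 1"] Wgrp_mult_Dp_diff[OF phi, of "q + 1" y]
      by (simp_all add: y_def)
    ultimately show ?thesis by simp
  qed
qed

lemma strict_mono_on_Rset: "strict_mono_on (Rset r d lam i) \<phi>"
proof (rule strict_mono_onI)
  fix x x' assume x: "x \<in> Rset r d lam i" "x' \<in> Rset r d lam i" "x < x'"
  have "x + 1 + int k \<in> Rset r d lam i \<Longrightarrow> \<phi> x < \<phi> (x + 1 + int k)" for k
  proof (induction k)
    case 0
    then show ?case using ascending_on_Rset[OF x(1)] by simp
  next
    case (Suc k)
    then have m: "x + 1 + int k \<in> Rset r d lam i" using x(1) unfolding mem_Rset_iff by simp
    then have "\<phi> x < \<phi> (x + 1 + int k)" using Suc.IH by blast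
    also have "\<dots> < \<phi> (x + 1 + int k + 1)" using ascending_on_Rset[OF m] Suc.prems by simp
    finally show ?case by (simp add: add.assoc)
  qed
  moreover have "x' = x + 1 + int (nat (x' - x - 1))" using x(3) by simp
  ultimately show "\<phi> x < \<phi> x'" using x(2) by metis
qed

end

section \<open>Counting inversions cell by cell\<close>

lemma card_symmetric_half:
  fixes A :: "int set"
  assumes fA: "finite A" and c: "c \<in> A" and sym: "\<And>z. z \<in> A \<Longrightarrow> 2 * c - z \<in> A"
  shows "real (card {z\<in>A. z > c}) = (real (card A) - 1) / 2"
    and "real (card {z\<in>A. z < c}) = (real (card A) - 1) / 2"
proof -
  have "{z\<in>A. z > c} = (\<lambda>z. 2 * c - z) ` {z\<in>A. z < c}"
    by (auto intro!: image_eqI[where x="2 * c - _"] sym)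
  moreover have "inj_on (\<lambda>z. 2 * c - z) {z\<in>A. z < c}" by (auto simp: inj_on_def)
  ultimately have e: "card {z\<in>A. z > c} = card {z\<in>A. z < c}" by (simp add: card_image)
  have U: "A = {z\<in>A. z < c} \<union> ({c} \<union> {z\<in>A. z > c})" using c by auto
  have "card A = card {z\<in>A. z < c} + card ({c} \<union> {z\<in>A. z > c})"
    by (subst U, rule card_Un_disjoint) (use fA in auto)
  also have "card ({c} \<union> {z\<in>A. z > c}) = 1 + card {z\<in>A. z > c}"
    by (subst card_Un_disjoint) (use fA in auto)
  finally have "card A = card {z\<in>A. z < c} + (1 + card {z\<in>A. z > c})" .
  then show "real (card {z\<in>A. z > c}) = (real (card A) - 1) / 2"
    and "real (card {z\<in>A. z < c}) = (real (card A) - 1) / 2"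
    using e by simp_all
qed

lemma infsum_card_fibres:
  fixes K :: "'b \<Rightarrow> 'c \<Rightarrow> nat" and f :: "'a \<Rightarrow> 'b \<times> 'c"
  assumes fQ: "finite Q" and Q: "Q = {w. f w \<in> S}"
    and K: "\<And>x y. (x, y) \<in> S \<Longrightarrow> K x y = card {w. f w = (x, y)}"
  shows "infsum (\<lambda>(x, y). c * real (K x y)) S = c * real (card Q)"
proof -
  define T where "T = f ` Q"
  have fT: "finite T" and TS: "T \<subseteq> S" using fQ Q by (auto simp: T_def)
  have fibre: "{w. f w = p} = {w\<in>Q. f w = p}" if "p \<in> S" for p using Q that by auto
  have "infsum (\<lambda>(x, y). c * real (K x y)) S = infsum (\<lambda>(x, y). c * real (K x y)) T"
  proof (rule infsum_cong_neutral)
    fix p assume p: "p \<in> S - T"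
    obtain x y where xy: "p = (x, y)" by (cases p)
    have "{w\<in>Q. f w = p} = {}" using p by (auto simp: T_def)
    then have "K x y = 0" using K[of x y] fibre[of p] p xy by (metis DiffD1 card.empty)
    then show "(\<lambda>(x, y). c * real (K x y)) p = 0" using xy by simp
  qed (use TS in auto)
  also have "\<dots> = (\<Sum>p\<in>T. c * real (card {w\<in>Q. f w = p}))"
    using fT TS K fibre by (auto simp: infsum_finite intro!: sum.cong)
  also have "\<dots> = c * real (\<Sum>p\<in>T. card {w\<in>Q. f w = p})" by (simp add: sum_distrib_left)
  also have "(\<Sum>p\<in>T. card {w\<in>Q. f w = p}) = card Q"
    using sum.group[OF fQ fT, of f "\<lambda>_. 1::nat"] by (simp add: T_def)
  finally show ?thesis .
qed

definition quadrant_sum :: "(int \<Rightarrow> int \<Rightarrow> nat) \<Rightarrow> real \<Rightarrow> int \<Rightarrow> int \<Rightarrow> real" where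
  "quadrant_sum a c i j =
     infsum (\<lambda>(x, y). c * real (a x y)) {(x, y). x < i \<and> y > j}
   + infsum (\<lambda>(x, y). c * real (a x y)) {(x, y). x > i \<and> y < j}"

definition block_of :: "nat \<Rightarrow> nat \<Rightarrow> (nat \<Rightarrow> nat) \<Rightarrow> int \<Rightarrow> int" where
  "block_of r d lam z = (THE i. z \<in> Rset r d lam i)"

context
  fixes r d :: nat and lam :: "nat \<Rightarrow> nat"
  assumes lam: "lam \<in> Lam r d"
begin

lemma mem_Rset_block_of: "z \<in> Rset r d lam (block_of r d lam z)"
proof -
  obtain i where i: "z \<in> Rset r d lam i" using Rset_cover[OF lam] by blast
  show ?thesis
    unfolding block_of_def by (rule theI[of _ i]) (use i Rset_unique[OF lam] in blast)+
qed

lemma mem_Rset_iff_block_of: "z \<in> Rset r d lam i \<longleftrightarrow> block_of r d lam z = i"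
  using mem_Rset_block_of Rset_unique[OF lam] by blast

lemma block_of_mono: "z \<le> z' \<Longrightarrow> block_of r d lam z \<le> block_of r d lam z'"
  using Rset_less[OF lam, OF mem_Rset_block_of[of z'] mem_Rset_block_of[of z]] by fastforce

lemma block_of_uminus: "block_of r d lam (- z) = - block_of r d lam z"
  using uminus_mem_Rset_iff[OF lam] mem_Rset_block_of[of z] mem_Rset_iff_block_of by blast

lemma block_of_add_Dp: "block_of r d lam (z + Dp d) = block_of r d lam z + np r"
  using add_Dp_mem_Rset_iff mem_Rset_block_of[of z] mem_Rset_iff_block_of by blast

lemma block_of_Dp_diff: "block_of r d lam (Dp d - z) = np r - block_of r d lam z"
  using block_of_add_Dp[of "- z"] block_of_uminus[of z] by simp

lemma block_of_0: "block_of r d lam 0 = 0"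
  using mem_Rset_iff_block_of[of 0 0] Rset_0 by simp

lemma block_of_Suc_d: "block_of r d lam (int d + 1) = int r + 1"
  using mem_Rset_iff_block_of[of "int d + 1" "int r + 1"] Rset_last by simp

lemma lam_first_last_le: "int (lam 0) + int (lam (r + 1)) \<le> int d"
proof -
  have "psum lam 0 \<le> psum lam r" by (rule psum_mono) simp
  then show ?thesis using psum_add_last[OF lam] by (simp add: psum_def)
qed

lemma block_of_bounds:
  assumes "0 \<le> block_of r d lam z" "block_of r d lam z \<le> int r + 1"
  shows "- int (lam 0) \<le> z" "z \<le> int d + 1 + int (lam (r + 1))"
proof -
  have z: "z \<in> Rset r d lam (block_of r d lam z)" by (rule mem_Rset_block_of)
  show "- int (lam 0) \<le> z"
  proof (rule ccontr)
    assume "\<not> - int (lam 0) \<le> z"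
    moreover have "- int (lam 0) \<in> Rset r d lam 0" using Rset_0 by simp
    ultimately have "block_of r d lam z = 0"
      using block_of_mono[of z "- int (lam 0)"] mem_Rset_iff_block_of assms by fastforce
    then show False using z Rset_0 \<open>\<not> - int (lam 0) \<le> z\<close> by simp
  qed
  show "z \<le> int d + 1 + int (lam (r + 1))"
  proof (rule ccontr)
    assume "\<not> z \<le> int d + 1 + int (lam (r + 1))"
    moreover have "int d + 1 + int (lam (r + 1)) \<in> Rset r d lam (int r + 1)"
      using Rset_last by simp
    ultimately have "block_of r d lam z = int r + 1"
      using block_of_mono[of "int d + 1 + int (lam (r + 1))" z] mem_Rset_iff_block_of assms
      by fastforce
    then show False using z Rset_last \<open>\<not> z \<le> int d + 1 + int (lam (r + 1))\<close> by simp
  qed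
qed

lemma finite_block: "finite {z. block_of r d lam z = i}"
proof -
  have "{z. block_of r d lam z = i} = Rset r d lam i" using mem_Rset_iff_block_of by blast
  then show ?thesis by (simp add: Rset_eq_atLeastAtMost)
qed

end

text \<open>\<open>cell z = (i, j)\<close> iff \<open>z \<in> R\<^sub>i\<^sup>\<lambda> \<inter> g(R\<^sub>j\<^sup>\<mu>)\<close>.\<close>
definition cell :: "nat \<Rightarrow> nat \<Rightarrow> (nat \<Rightarrow> nat) \<Rightarrow> (nat \<Rightarrow> nat) \<Rightarrow> (int \<Rightarrow> int) \<Rightarrow> int \<Rightarrow> int \<times> int" where
  "cell r d lam mu g z = (block_of r d lam z, block_of r d mu (inv g z))"

definition fold_Dp :: "nat \<Rightarrow> int \<Rightarrow> int" where
  "fold_Dp d z = (if z \<le> 0 then - z else if z \<ge> int d + 1 then Dp d - z else z)"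

lemma inversions_at_fold_Dp: "g \<in> Wgrp d \<Longrightarrow> inversions_at g (fold_Dp d z) = inversions_at g z"
  using inversions_at_uminus inversions_at_Dp_diff by (simp add: fold_Dp_def)

lemma Iplus_iff:
  "(i, j) \<in> Iplus r \<longleftrightarrow> (i = 0 \<and> j \<ge> 0) \<or> (1 \<le> i \<and> i \<le> int r) \<or> (i = int r + 1 \<and> j \<le> int r + 1)"
  by (simp add: Iplus_def)

lemma Iplus_diag_dvd:
  assumes "(i, i) \<in> Iplus r" "(int r + 1) dvd i"
  shows "i = 0 \<or> i = int r + 1"
proof (rule ccontr)
  assume "\<not> (i = 0 \<or> i = int r + 1)"
  then have "1 \<le> i" "i \<le> int r" using assms(1) Iplus_iff by auto
  then show False using zdvd_imp_le[OF assms(2)] by simp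
qed

context
  fixes r d :: nat and lam mu :: "nat \<Rightarrow> nat" and g :: "int \<Rightarrow> int"
  assumes lam: "lam \<in> Lam r d" and mu: "mu \<in> Lam r d" and gW: "g \<in> Wgrp d"
    and inv_mono: "\<And>i. strict_mono_on (Rset r d lam i) (inv g)"
    and mono: "\<And>j. strict_mono_on (Rset r d mu j) g"
begin

lemma inv_in_Wgrp: "inv g \<in> Wgrp d"
  using Wgrp_inv[OF gW] .

lemma kap_eq_card_cell: "kap r d lam g mu x y = card {z. cell r d lam mu g z = (x, y)}"
proof -
  have "z \<in> g ` Rset r d mu y \<longleftrightarrow> inv g z \<in> Rset r d mu y" for z
    using Wgrp_f_inv_f[OF gW] Wgrp_inv_f_f[OF gW] by (metis imageE imageI)
  then have "Rset r d lam x \<inter> g ` Rset r d mu y = {z. cell r d lam mu g z = (x, y)}"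
    using mem_Rset_iff_block_of[OF lam] mem_Rset_iff_block_of[OF mu] by (auto simp: cell_def)
  then show ?thesis by (simp add: kap_def)
qed

lemma block_of_less_of_inversion:
  assumes "w < z" "inv g z < inv g w"
  shows "block_of r d lam w < block_of r d lam z"
    and "block_of r d mu (inv g z) < block_of r d mu (inv g w)"
proof -
  have w: "w \<in> Rset r d lam (block_of r d lam w)" "inv g w \<in> Rset r d mu (block_of r d mu (inv g w))"
    and z: "z \<in> Rset r d lam (block_of r d lam z)" "inv g z \<in> Rset r d mu (block_of r d mu (inv g z))"
    using mem_Rset_block_of[OF lam] mem_Rset_block_of[OF mu] by auto
  have "block_of r d lam w \<noteq> block_of r d lam z"
    using strict_mono_onD[OF inv_mono w(1) _ assms(1)] z(1) assms(2) by fastforce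
  then show "block_of r d lam w < block_of r d lam z"
    using block_of_mono[OF lam, of w z] assms(1) by simp
  have "block_of r d mu (inv g z) \<noteq> block_of r d mu (inv g w)"
    using strict_mono_onD[OF mono z(2) _ assms(2)] w(2) assms(1) Wgrp_f_inv_f[OF gW] by fastforce
  then show "block_of r d mu (inv g z) < block_of r d mu (inv g w)"
    using block_of_mono[OF mu, of "inv g z" "inv g w"] assms(2) by simp
qed

text \<open>Within a cell \<open>g\<^sup>-\<^sup>1\<close> is increasing in both coordinates, so inversions of \<open>g\<^sup>-\<^sup>1\<close>
  are exactly the pairs lying in opposite quadrants of each other's cell.\<close>
lemma inversion_iff_cell:
  assumes z: "cell r d lam mu g z = (i, j)"
  shows "(z - w) * (inv g z - inv g w) < 0 \<longleftrightarrow>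
    (block_of r d lam w < i \<and> block_of r d mu (inv g w) > j) \<or>
    (block_of r d lam w > i \<and> block_of r d mu (inv g w) < j)"
proof -
  have i: "i = block_of r d lam z" and j: "j = block_of r d mu (inv g z)"
    using z by (auto simp: cell_def)
  have "z \<in> Rset r d lam i" "inv g z \<in> Rset r d mu j"
    "w \<in> Rset r d lam (block_of r d lam w)" "inv g w \<in> Rset r d mu (block_of r d mu (inv g w))"
    using z mem_Rset_block_of[OF lam] mem_Rset_block_of[OF mu] i j by auto
  then show ?thesis
    using block_of_less_of_inversion[of w z] block_of_less_of_inversion[of z w] i j
      Rset_less[OF lam] Rset_less[OF mu] by (auto simp: mult_less_0_iff)
qed

lemma finite_cell: "finite {z. cell r d lam mu g z = p}"
proof -
  have "{z. cell r d lam mu g z = p} \<subseteq> {z. block_of r d lam z = fst p}" by (auto simp: cell_def)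
  then show ?thesis using finite_block[OF lam] finite_subset by blast
qed

lemma quadrant_sum_cell:
  assumes z: "cell r d lam mu g z = (i, j)"
  shows "quadrant_sum (kap r d lam g mu) c i j = c * real (inversions_at (inv g) z)"
proof -
  define NE where "NE = {w. block_of r d lam w < i \<and> block_of r d mu (inv g w) > j}"
  define SW where "SW = {w. block_of r d lam w > i \<and> block_of r d mu (inv g w) < j}"
  have e: "{w. (z - w) * (inv g z - inv g w) < 0} = NE \<union> SW"
    using inversion_iff_cell[OF z] by (auto simp: NE_def SW_def)
  have "finite {w. (z - w) * (inv g z - inv g w) < 0}" by (rule finite_inversions[OF inv_in_Wgrp])
  then have fin: "finite NE" "finite SW" unfolding e by auto
  have "NE \<inter> SW = {}" by (auto simp: NE_def SW_def)
  then have "inversions_at (inv g) z = card NE + card SW"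
    unfolding inversions_at_def e using fin by (simp add: card_Un_disjoint)
  moreover have "infsum (\<lambda>(x, y). c * real (kap r d lam g mu x y)) {(x, y). x < i \<and> y > j}
      = c * real (card NE)"
    by (rule infsum_card_fibres[where f="cell r d lam mu g"])
      (use fin kap_eq_card_cell in \<open>auto simp: NE_def cell_def\<close>)
  moreover have "infsum (\<lambda>(x, y). c * real (kap r d lam g mu x y)) {(x, y). x > i \<and> y < j}
      = c * real (card SW)"
    by (rule infsum_card_fibres[where f="cell r d lam mu g"])
      (use fin kap_eq_card_cell in \<open>auto simp: SW_def cell_def\<close>)
  ultimately show ?thesis by (simp add: quadrant_sum_def algebra_simps)
qed

lemma cell_uminus: "cell r d lam mu g (- z) = (- fst (cell r d lam mu g z), - snd (cell r d lam mu g z))"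
  using block_of_uminus[OF lam, of z] block_of_uminus[OF mu, of "inv g z"]
    Wgrp_uminus[OF inv_in_Wgrp, of z] by (simp add: cell_def)

lemma cell_Dp_diff:
  "cell r d lam mu g (Dp d - z) = (np r - fst (cell r d lam mu g z), np r - snd (cell r d lam mu g z))"
  using block_of_Dp_diff[OF lam, of z] block_of_Dp_diff[OF mu, of "inv g z"]
    Wgrp_mult_Dp_diff[OF inv_in_Wgrp, of 1 z] by (simp add: cell_def)

lemma cell_0: "cell r d lam mu g 0 = (0, 0)"
  using block_of_0[OF lam] block_of_0[OF mu] Wgrp_zero[OF inv_in_Wgrp] by (simp add: cell_def)

lemma cell_Suc_d: "cell r d lam mu g (int d + 1) = (int r + 1, int r + 1)"
  using block_of_Suc_d[OF lam] block_of_Suc_d[OF mu] Wgrp_fix_Suc_d[OF inv_in_Wgrp]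
  by (simp add: cell_def)

lemma quadrant_sum_empty_cell:
  assumes p: "(i, j) \<in> Iplus r" and e: "\<And>z. cell r d lam mu g z \<noteq> (i, j)"
  shows "quadrant_sum (kap r d lam g mu) (aprime r (kap r d lam g mu) i j) i j = 0"
proof -
  have "\<not> (i = j \<and> (int r + 1) dvd i)"
    using Iplus_diag_dvd[of i r] p e cell_0 cell_Suc_d by auto
  then have "aprime r (kap r d lam g mu) i j = real (kap r d lam g mu i j)"
    unfolding aprime_def by (rule if_not_P)
  also have "\<dots> = 0" using kap_eq_card_cell[of i j] e by simp
  moreover have "infsum (\<lambda>(x::int, y::int). 0 :: real) S = 0" for S by (rule infsum_0) auto
  ultimately show ?thesis by (simp add: quadrant_sum_def)
qed

text \<open>The points of the cells in \<open>I\<^sup>+\<close>, except for the non-positive half of the cell \<open>(0, 0)\<close>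
  and the half \<open>\<ge> d + 1\<close> of the cell \<open>(r + 1, r + 1)\<close>: \<open>fold_Dp\<close> maps it bijectively onto
  \<open>[1..d]\<close>. The two halved cells are symmetric about \<open>0\<close> and \<open>d + 1\<close>, which is where
  \<open>a'\<^sub>i\<^sub>i = (a\<^sub>i\<^sub>i - 1) / 2\<close> comes from.\<close>
definition fund_domain where
  "fund_domain = {z. cell r d lam mu g z \<in> Iplus r
     \<and> \<not> (cell r d lam mu g z = (0, 0) \<and> z \<le> 0)
     \<and> \<not> (cell r d lam mu g z = (int r + 1, int r + 1) \<and> z \<ge> int d + 1)}"

lemma fund_domain_bounds: "z \<in> fund_domain \<Longrightarrow> - int (lam 0) \<le> z \<and> z \<le> int d + 1 + int (lam (r + 1))"
proof -
  assume z: "z \<in> fund_domain"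
  obtain i j where c: "cell r d lam mu g z = (i, j)" by (cases "cell r d lam mu g z")
  have "(i, j) \<in> Iplus r" using z c by (simp add: fund_domain_def)
  then have "0 \<le> i" "i \<le> int r + 1" using Iplus_iff by auto
  moreover have "i = block_of r d lam z" using c by (simp add: cell_def)
  ultimately show ?thesis using block_of_bounds[OF lam] by auto
qed

lemma fund_domain_nonpos:
  assumes z: "z \<in> fund_domain" "z \<le> 0"
  shows "block_of r d lam z = 0" "snd (cell r d lam mu g z) > 0" "- z \<le> int (lam 0)" "z \<noteq> 0"
proof -
  obtain i j where c: "cell r d lam mu g z = (i, j)" by (cases "cell r d lam mu g z")
  have ij: "(i, j) \<in> Iplus r" using z c by (simp add: fund_domain_def)
  have bi: "i = block_of r d lam z" using c by (simp add: cell_def)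
  have "block_of r d lam z \<le> 0" using block_of_mono[OF lam z(2)] block_of_0[OF lam] by simp
  then show b0: "block_of r d lam z = 0" using ij bi Iplus_iff by auto
  then have "j \<ge> 0" using ij bi Iplus_iff by auto
  moreover have "j \<noteq> 0" using z c bi b0 by (auto simp: fund_domain_def)
  ultimately show "snd (cell r d lam mu g z) > 0" using c by simp
  show "- z \<le> int (lam 0)" using fund_domain_bounds[OF z(1)] by simp
  show "z \<noteq> 0" using z cell_0 by (auto simp: fund_domain_def)
qed

lemma fund_domain_ge_Suc_d:
  assumes z: "z \<in> fund_domain" "z \<ge> int d + 1"
  shows "block_of r d lam z = int r + 1" "snd (cell r d lam mu g z) < int r + 1"
    "z \<le> int d + 1 + int (lam (r + 1))" "z \<noteq> int d + 1"
proof -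
  obtain i j where c: "cell r d lam mu g z = (i, j)" by (cases "cell r d lam mu g z")
  have ij: "(i, j) \<in> Iplus r" using z c by (simp add: fund_domain_def)
  have bi: "i = block_of r d lam z" using c by (simp add: cell_def)
  have "block_of r d lam z \<ge> int r + 1" using block_of_mono[OF lam z(2)] block_of_Suc_d[OF lam] by simp
  then show b0: "block_of r d lam z = int r + 1" using ij bi Iplus_iff by auto
  then have "j \<le> int r + 1" using ij bi Iplus_iff by auto
  moreover have "j \<noteq> int r + 1" using z c bi b0 by (auto simp: fund_domain_def)
  ultimately show "snd (cell r d lam mu g z) < int r + 1" using c by simp
  show "z \<le> int d + 1 + int (lam (r + 1))" using fund_domain_bounds[OF z(1)] by simp
  show "z \<noteq> int d + 1" using z cell_Suc_d by (auto simp: fund_domain_def)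
qed

lemma fund_domain_uminus_notin: "z \<in> fund_domain \<Longrightarrow> z \<le> 0 \<Longrightarrow> - z \<notin> fund_domain"
proof
  assume z: "z \<in> fund_domain" "z \<le> 0" and nz: "- z \<in> fund_domain"
  have "snd (cell r d lam mu g (- z)) < 0" using fund_domain_nonpos[OF z] cell_uminus[of z] by simp
  moreover have "fst (cell r d lam mu g (- z)) = 0" using fund_domain_nonpos[OF z] cell_uminus[of z] by (simp add: cell_def)
  ultimately have "cell r d lam mu g (- z) \<notin> Iplus r"
    using Iplus_iff by (cases "cell r d lam mu g (- z)") auto
  then show False using nz by (simp add: fund_domain_def)
qed

lemma fund_domain_Dp_diff_notin: "z \<in> fund_domain \<Longrightarrow> z \<ge> int d + 1 \<Longrightarrow> Dp d - z \<notin> fund_domain"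
proof
  assume z: "z \<in> fund_domain" "z \<ge> int d + 1" and nz: "Dp d - z \<in> fund_domain"
  have n: "np r = 2 * int r + 2" by (simp add: np_def)
  have "snd (cell r d lam mu g (Dp d - z)) > int r + 1" using fund_domain_ge_Suc_d[OF z] cell_Dp_diff[of z] n by simp
  moreover have "fst (cell r d lam mu g (Dp d - z)) = int r + 1" using fund_domain_ge_Suc_d[OF z] cell_Dp_diff[of z] n by (simp add: cell_def)
  ultimately have "cell r d lam mu g (Dp d - z) \<notin> Iplus r"
    using Iplus_iff by (cases "cell r d lam mu g (Dp d - z)") auto
  then show False using nz by (simp add: fund_domain_def)
qed

lemma fold_Dp_fund_domain:
  assumes z: "z \<in> fund_domain"
  shows "fold_Dp d z \<in> {1..int d}"
proof -
  have "int (lam 0) + int (lam (r + 1)) \<le> int d" by (rule lam_first_last_le[OF lam])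
  moreover have "Dp d = 2 * int d + 2" by (simp add: Dp_def)
  ultimately show ?thesis
    using fund_domain_nonpos[OF z] fund_domain_ge_Suc_d[OF z] by (cases "z \<le> 0"; cases "z \<ge> int d + 1")
      (auto simp: fold_Dp_def)
qed

lemma fold_Dp_eq_imp_eq:
  assumes a: "a \<in> fund_domain" "b \<in> fund_domain" "fold_Dp d a = fold_Dp d b" "a \<le> 0 \<or> a \<ge> int d + 1"
  shows "a = b"
proof -
  have D: "Dp d = 2 * int d + 2" by (simp add: Dp_def)
  have ll: "int (lam 0) + int (lam (r + 1)) \<le> int d" by (rule lam_first_last_le[OF lam])
  consider "a \<le> 0" "b \<le> 0" | "a \<le> 0" "b > 0" "b < int d + 1" | "a \<le> 0" "b \<ge> int d + 1"
    | "a \<ge> int d + 1" "b \<le> 0" | "a \<ge> int d + 1" "b > 0" "b < int d + 1"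
    | "a \<ge> int d + 1" "b \<ge> int d + 1"
    using a(4) by linarith
  then show "a = b"
  proof cases
    case 2
    then have "b = - a" using a by (simp add: fold_Dp_def)
    then show ?thesis using fund_domain_uminus_notin[OF a(1) 2(1)] a(2) by simp
  next
    case 3
    have "- a = Dp d - b" using a 3 D by (simp add: fold_Dp_def)
    then show ?thesis using fund_domain_nonpos[OF a(1) 3(1)] fund_domain_ge_Suc_d[OF a(2) 3(2)] ll D by linarith
  next
    case 4
    have "- b = Dp d - a" using a 4 D by (simp add: fold_Dp_def)
    then show ?thesis using fund_domain_nonpos[OF a(2) 4(2)] fund_domain_ge_Suc_d[OF a(1) 4(1)] ll D by linarith
  next
    case 5
    then have "b = Dp d - a" using a D by (simp add: fold_Dp_def)
    then show ?thesis using fund_domain_Dp_diff_notin[OF a(1) 5(1)] a(2) by simp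
  qed (use a D in \<open>simp_all add: fold_Dp_def\<close>)
qed

lemma inj_on_fold_Dp_fund_domain: "inj_on (fold_Dp d) fund_domain"
proof (rule inj_onI)
  fix z z' assume z: "z \<in> fund_domain" "z' \<in> fund_domain" and e: "fold_Dp d z = fold_Dp d z'"
  consider "z \<le> 0 \<or> z \<ge> int d + 1" | "z' \<le> 0 \<or> z' \<ge> int d + 1"
    | "0 < z \<and> z < int d + 1 \<and> 0 < z' \<and> z' < int d + 1"
    by linarith
  then show "z = z'"
  proof cases
    case 1 then show ?thesis using fold_Dp_eq_imp_eq[OF z e] by simp
  next
    case 2 then show ?thesis using fold_Dp_eq_imp_eq[OF z(2,1) e[symmetric]] by simp
  next
    case 3 then show ?thesis using e by (simp add: fold_Dp_def)
  qed
qed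

lemma fold_Dp_fund_domain_surj: "{1..int d} \<subseteq> fold_Dp d ` fund_domain"
proof
  fix y assume y: "y \<in> {1..int d}"
  obtain i j where c: "cell r d lam mu g y = (i, j)" by (cases "cell r d lam mu g y")
  have i: "i = block_of r d lam y" using c by (simp add: cell_def)
  have "0 \<le> i" "i \<le> int r + 1"
    using block_of_mono[OF lam, of 0 y] block_of_mono[OF lam, of y "int d + 1"]
      block_of_0[OF lam] block_of_Suc_d[OF lam] y i by auto
  then have "(i, j) \<in> Iplus r \<or> i = 0 \<and> j < 0 \<or> i = int r + 1 \<and> j > int r + 1"
    by (auto simp: Iplus_iff)
  then consider "(i, j) \<in> Iplus r" | "i = 0" "j < 0" | "i = int r + 1" "j > int r + 1"
    by blast
  then show "y \<in> fold_Dp d ` fund_domain"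
  proof cases
    case 1
    then have "y \<in> fund_domain" using c y by (auto simp: fund_domain_def)
    moreover have "fold_Dp d y = y" using y by (simp add: fold_Dp_def)
    ultimately show ?thesis by (metis imageI)
  next
    case 2
    then have "- y \<in> fund_domain" using cell_uminus[of y] c y by (auto simp: fund_domain_def Iplus_iff)
    moreover have "fold_Dp d (- y) = y" using y by (simp add: fold_Dp_def)
    ultimately show ?thesis by (metis imageI)
  next
    case 3
    then have "Dp d - y \<in> fund_domain" using cell_Dp_diff[of y] c y by (auto simp: fund_domain_def Iplus_iff np_def)
    moreover have "fold_Dp d (Dp d - y) = y" using y by (auto simp: fold_Dp_def Dp_def)
    ultimately show ?thesis by (metis imageI)
  qed
qed

lemma bij_betw_fold_Dp_fund_domain: "bij_betw (fold_Dp d) fund_domain {1..int d}"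
  unfolding bij_betw_def using inj_on_fold_Dp_fund_domain fold_Dp_fund_domain fold_Dp_fund_domain_surj by blast

lemma card_fund_domain_cell:
  assumes p: "(i, j) \<in> Iplus r" and z0: "cell r d lam mu g z0 = (i, j)"
  shows "real (card {z\<in>fund_domain. cell r d lam mu g z = (i, j)}) = aprime r (kap r d lam g mu) i j"
proof -
  define C where "C = {z. cell r d lam mu g z = (i, j)}"
  have K: "kap r d lam g mu i j = card C" unfolding C_def by (rule kap_eq_card_cell)
  have fC: "finite C" unfolding C_def by (rule finite_cell)
  consider "i = 0" "j = 0" | "i = int r + 1" "j = int r + 1" | "\<not> (i = j \<and> (int r + 1) dvd i)"
    using Iplus_diag_dvd[of i r] p by blast
  then show ?thesis
  proof cases
    case 1
    have "{z\<in>fund_domain. cell r d lam mu g z = (i, j)} = {z\<in>C. z > 0}"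
      using p 1 unfolding C_def fund_domain_def by auto
    moreover have "real (card {z\<in>C. z > 0}) = (real (card C) - 1) / 2"
      by (rule card_symmetric_half(1)) (use fC cell_0 cell_uminus 1 in \<open>auto simp: C_def\<close>)
    ultimately show ?thesis using K 1 by (simp add: aprime_def)
  next
    case 2
    have "{z\<in>fund_domain. cell r d lam mu g z = (i, j)} = {z\<in>C. z < int d + 1}"
      using p 2 unfolding C_def fund_domain_def by auto
    moreover have "real (card {z\<in>C. z < int d + 1}) = (real (card C) - 1) / 2"
    proof (rule card_symmetric_half(2))
      fix z assume "z \<in> C"
      then show "2 * (int d + 1) - z \<in> C"
        using cell_Dp_diff[of z] 2 by (simp add: C_def Dp_def np_def algebra_simps)
    qed (use fC cell_Suc_d 2 in \<open>auto simp: C_def\<close>)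
    ultimately show ?thesis using K 2 by (simp add: aprime_def)
  next
    case 3
    then have "{z\<in>fund_domain. cell r d lam mu g z = (i, j)} = C"
      using p unfolding C_def fund_domain_def by auto
    moreover have "aprime r (kap r d lam g mu) i j = real (kap r d lam g mu i j)"
      unfolding aprime_def by (rule if_not_P[OF 3])
    ultimately show ?thesis using K by simp
  qed
qed

lemma inversions_at_cell_eq:
  assumes "cell r d lam mu g z = cell r d lam mu g z'"
  shows "inversions_at (inv g) z = inversions_at (inv g) z'"
proof -
  obtain i j where ij: "cell r d lam mu g z = (i, j)" by (cases "cell r d lam mu g z")
  moreover have ij': "cell r d lam mu g z' = (i, j)" using ij assms by simp
  ultimately have "real (inversions_at (inv g) z) = real (inversions_at (inv g) z')"
    using quadrant_sum_cell[OF ij, of 1] quadrant_sum_cell[OF ij', of 1] by simp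
  then show ?thesis by simp
qed

lemma finite_fund_domain: "finite fund_domain"
proof -
  have "fund_domain \<subseteq> {- int d .. 2 * int d + 1}"
    using fund_domain_bounds lam_first_last_le[OF lam] by fastforce
  then show ?thesis by (rule finite_subset) simp
qed

lemma sum_fund_domain_eq_inversion_sum:
  "(\<Sum>z\<in>fund_domain. real (inversions_at (inv g) z)) = real (inversion_sum d (inv g))"
proof -
  have "(\<Sum>z\<in>fund_domain. real (inversions_at (inv g) (fold_Dp d z)))
      = (\<Sum>y\<in>{1..int d}. real (inversions_at (inv g) y))"
    by (rule sum.reindex_bij_betw[OF bij_betw_fold_Dp_fund_domain])
  then show ?thesis
    using inversions_at_fold_Dp[OF inv_in_Wgrp] by (simp add: inversion_sum_def)
qed

text \<open>Only finitely many cells of \<open>I\<^sup>+\<close> are occupied; on each of them the summand equals the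
  inversion count of \<open>g\<^sup>-\<^sup>1\<close> at any of its points times the number of its points in \<open>fund_domain\<close>.\<close>
lemma infsum_Iplus_eq_inversion_sum:
  "infsum (\<lambda>(i, j). quadrant_sum (kap r d lam g mu) (aprime r (kap r d lam g mu) i j) i j) (Iplus r)
   = real (inversion_sum d (inv g))"
  (is "infsum ?G (Iplus r) = _")
proof -
  define occ where "occ = {p \<in> Iplus r. \<exists>z. cell r d lam mu g z = p}"
  have occ_sub: "occ \<subseteq> cell r d lam mu g ` {- int d .. 2 * int d + 1}"
  proof
    fix p assume "p \<in> occ"
    then obtain z where z: "cell r d lam mu g z = p" and p: "p \<in> Iplus r" by (auto simp: occ_def)
    then have "- int (lam 0) \<le> z" "z \<le> int d + 1 + int (lam (r + 1))"
      using block_of_bounds[OF lam, of z] by (auto simp: cell_def Iplus_iff)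
    then have "z \<in> {- int d .. 2 * int d + 1}" using lam_first_last_le[OF lam] by auto
    then show "p \<in> cell r d lam mu g ` {- int d .. 2 * int d + 1}" using z by blast
  qed
  have fin: "finite occ" using occ_sub finite_subset by blast
  have "infsum ?G (Iplus r) = infsum ?G occ"
    by (rule infsum_cong_neutral) (auto simp: occ_def quadrant_sum_empty_cell)
  also have "\<dots> = (\<Sum>p\<in>occ. ?G p)" using fin by (rule infsum_finite)
  also have "\<dots> = (\<Sum>p\<in>occ. \<Sum>z\<in>{z\<in>fund_domain. cell r d lam mu g z = p}. real (inversions_at (inv g) z))"
  proof (rule sum.cong[OF refl])
    fix p assume "p \<in> occ"
    then obtain z0 where z0: "cell r d lam mu g z0 = p" and pI: "p \<in> Iplus r" by (auto simp: occ_def)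
    obtain i j where ij: "p = (i, j)" by (cases p)
    note p = ij pI[unfolded ij] and z0 = z0[unfolded ij]
    have "(\<Sum>z\<in>{z\<in>fund_domain. cell r d lam mu g z = p}. real (inversions_at (inv g) z))
        = (\<Sum>z\<in>{z\<in>fund_domain. cell r d lam mu g z = p}. real (inversions_at (inv g) z0))"
      by (intro sum.cong refl arg_cong[where f = real] inversions_at_cell_eq) (use z0 p in simp)
    also have "\<dots> = real (card {z\<in>fund_domain. cell r d lam mu g z = p}) * real (inversions_at (inv g) z0)"
      by simp
    also have "\<dots> = ?G p"
      using card_fund_domain_cell[OF p(2) z0] quadrant_sum_cell[OF z0] p by simp
    finally show "?G p = (\<Sum>z\<in>{z\<in>fund_domain. cell r d lam mu g z = p}. real (inversions_at (inv g) z))" ..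
  qed
  also have "\<dots> = (\<Sum>z\<in>fund_domain. real (inversions_at (inv g) z))"
    by (rule sum.group[OF finite_fund_domain fin]) (auto simp: occ_def fund_domain_def)
  finally show ?thesis using sum_fund_domain_eq_inversion_sum by simp
qed

end

theorem proposition5p2p1:
  fixes r d :: nat and lam mu :: "nat \<Rightarrow> nat" and g :: "int \<Rightarrow> int"
  assumes "d \<ge> 2"
    and "lam \<in> Lam r d" and "mu \<in> Lam r d"
    and "g \<in> Dset2 r d lam mu"
  shows "real (clen d g) = 1 / 2 *
    infsum (\<lambda>(i, j).
        infsum (\<lambda>(x, y). aprime r (kap r d lam g mu) i j * real (kap r d lam g mu x y))
               {(x, y). x < i \<and> y > j}
      + infsum (\<lambda>(x, y). aprime r (kap r d lam g mu) i j * real (kap r d lam g mu x y))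
               {(x, y). x > i \<and> y < j})
      (Iplus r)"
proof -
  note d = assms(1) and lam = assms(2) and mu = assms(3)
  obtain g0 where g0: "g0 \<in> Dset r d mu" "g = inv g0" and g: "g \<in> Dset r d lam"
    using assms(4) by (auto simp: Dset2_def)
  have gW: "g \<in> Wgrp d" using g by (simp add: Dset_def)
  have "Wpar_ascending r d mu g" using Dset_imp_Wpar_ascending_inv[OF d g0(1)] g0(2) by simp
  then have mono: "strict_mono_on (Rset r d mu j) g" for j by (rule strict_mono_on_Rset[OF mu d gW])
  have "strict_mono_on (Rset r d lam i) (inv g)" for i
    using Dset_imp_Wpar_ascending_inv[OF d g] by (rule strict_mono_on_Rset[OF lam d Wgrp_inv[OF gW]])
  then have "infsum (\<lambda>(i, j). quadrant_sum (kap r d lam g mu) (aprime r (kap r d lam g mu) i j) i j)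
      (Iplus r) = real (inversion_sum d (inv g))"
    using mono by (rule infsum_Iplus_eq_inversion_sum[OF lam mu gW])
  also have "inversion_sum d (inv g) = 2 * clen d g"
    using twice_clen_eq_inversion_sum[OF d Wgrp_inv[OF gW]] clen_inv[OF d gW] by simp
  finally show ?thesis by (simp add: quadrant_sum_def)
qed

end
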